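(* Let $\mathbf{F}$ be a field of characteristic $3$, let $\lambda=(\lambda_1,\lambda_2)$ be a partition of $r$ with $m=\lambda_1-\lambda_2$, and let $g\in\mathbf{N}_0$ with $g\le\lambda_2$ and $B(m,g)\not\equiv0\pmod 3$. Put $\lambda=(m+g,g)$ so that $r=m+2g$. Then $e_{m,g}M^{(m+g,g)}\cong M^{(r,0)}=Y^{(r,0)}$. More precisely, with $u=B(m,g)\,1_{\lambda}f^{(g)}1_{(r,0)}$ and $v=1_{(r,0)}e^{(g)}1_\lambda$ in the Schur algebra $S_\mathbf{F}(2,r)=\operatorname{End}_{\mathbf{F}S_r}(E^{\otimes r})$, one has $uv=e_{m,g}$ and $vu=1_{(r,0)}$.
   Context: $E$ has basis $v_1,v_2$; $S_r$ acts on $E^{\otimes r}$ by place permutation; for a composition $\nu=(\nu_1,\nu_2)$ of $r$, $M^\nu$ is the span of the $v_{i_1}\otimes\cdots\otimes v_{i_r}$ with $\nu_1$ indices $1$ and $\nu_2$ indices $2$, and $1_\nu$ is the projection of $E^{\otimes r}$ onto $M^\nu$. $e=e_{21},f=e_{12}\in\mathfrak{gl}_2$ act on $E^{\otimes r}$, with divided powers $e^{(a)},f^{(a)}$ (integral operators reduced mod 3). $S_\mathbf{F}(\lambda)=1_\lambda S_\mathbf{F}(2,r)1_\lambda=\operatorname{End}_{\mathbf{F}S_r}(M^\lambda)$ has basis $b(i)=1_\lambda f^{(i)}e^{(i)}1_\lambda$, $0\le i\le\lambda_2$, with $b(0)=\mathbf{1}$, multiplication $b(i)b(j)=\sum_{h=\max\{i,j\}}^{i+j}\binom{h}{i}\binom{h}{j}\binom{m+i+j}{i+j-h}b(h)$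 and $b(a)=0$ for $a>\lambda_2$. $Y^{(r,0)}$ denotes the Young module, equal to the trivial module $M^{(r,0)}$. $B(m,g)=\binom{m+2g}{g}$; with base-3 digits $(m+2g)_u,g_u$, let $I^{(0)}=\{u: g_u=0,(m+2g)_u=0\}$, $J^{(0)}=\{u:g_u=1,(m+2g)_u=2\}$, $I^{(1)}=\{u:g_u=0,(m+2g)_u=1\}$, $J^{(1)}=\{u:g_u=2,(m+2g)_u=2\}$, $I^{(2)}=\{u:g_u=0,(m+2g)_u=2\}$, $J^{(2)}=\{u:g_u=1,(m+2g)_u=1\}$ and \[e_{m,g}=\prod_{u\in I^{(0)}}(\mathbf{1}+b(3^u)-b(2\cdot3^u))\prod_{u\in J^{(0)}}(b(2\cdot3^u)-b(3^u))\prod_{u\in I^{(1)}}(\mathbf{1}-b(2\cdot3^u))\prod_{u\in J^{(1)}}b(2\cdot3^u)\prod_{u\in I^{(2)}}(\mathbf{1}-b(3^u)+b(2\cdot3^u))\prod_{u\in J^{(2)}}(b(3^u)-b(2\cdot3^u)),\] with $b(a)=0$ for $a>\lambda_2$. *)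

theory Defs
  imports Main "HOL-Combinatorics.Permutations"
begin

text \<open>Basis vectors v_{i_1} \<otimes> ... \<otimes> v_{i_r} are indexed by words of length r
  over the alphabet {1,2}.\<close>

definition words :: "nat \<Rightarrow> nat list set" where
  "words r = {w. length w = r \<and> set w \<subseteq> {1, 2}}"

definition nones :: "nat list \<Rightarrow> nat" where
  "nones w = length (filter (\<lambda>x. x = 1) w)"

text \<open>Operators on E^{\<otimes>r} as matrices w.r.t. the word basis:
  A w w' is the coefficient of v_w in A(v_{w'}); entries outside words r are 0.\<close>

definition mmul :: "nat \<Rightarrow> (nat list \<Rightarrow> nat list \<Rightarrow> 'a::comm_ring_1)
    \<Rightarrow> (nat list \<Rightarrow> nat list \<Rightarrow> 'a) \<Rightarrow> (nat list \<Rightarrow> nat list \<Rightarrow> 'a)" where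
  "mmul r A B = (\<lambda>w w''. if w \<in> words r \<and> w'' \<in> words r
      then (\<Sum>w'\<in>words r. A w w' * B w' w'') else 0)"

definition idm :: "nat \<Rightarrow> nat list \<Rightarrow> nat list \<Rightarrow> 'a::comm_ring_1" where
  "idm r = (\<lambda>w w'. if w \<in> words r \<and> w' = w then 1 else 0)"

primrec mpow :: "nat \<Rightarrow> (nat list \<Rightarrow> nat list \<Rightarrow> 'a::comm_ring_1) \<Rightarrow> nat
    \<Rightarrow> (nat list \<Rightarrow> nat list \<Rightarrow> 'a)" where
  "mpow r A 0 = idm r"
| "mpow r A (Suc n) = mmul r A (mpow r A n)"

text \<open>1_\<nu> for \<nu> = (k, r - k): projection of E^{\<otimes>r} onto M^\<nu>.\<close>
definition proj :: "nat \<Rightarrow> nat \<Rightarrow> nat list \<Rightarrow> nat list \<Rightarrow> 'a::comm_ring_1" where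
  "proj r k = (\<lambda>w w'. if w \<in> words r \<and> w' = w \<and> nones w = k then 1 else 0)"

text \<open>The integral operators e and f on E^{\<otimes>r} (acting as derivations, i.e. as
  \<Sum>_i 1\<otimes>..\<otimes>x\<otimes>..\<otimes>1).  Convention: e sends v_2 to v_1 and v_1 to 0,
  f sends v_1 to v_2 and v_2 to 0 (so that e^{(i)} raises and f^{(i)} lowers the
  number of v_1-factors).\<close>

definition change_one :: "nat \<Rightarrow> nat \<Rightarrow> nat list \<Rightarrow> nat list \<Rightarrow> bool" where
  "change_one a b w w' \<longleftrightarrow> length w = length w' \<and>
     (\<exists>i<length w'. w' ! i = a \<and> w = w'[i := b])"

definition e_int :: "nat \<Rightarrow> nat list \<Rightarrow> nat list \<Rightarrow> int" where
  "e_int r = (\<lambda>w w'. if w \<in> words r \<and> w' \<in> words r \<and> change_one 2 1 w w' then 1 else 0)"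

definition f_int :: "nat \<Rightarrow> nat list \<Rightarrow> nat list \<Rightarrow> int" where
  "f_int r = (\<lambda>w w'. if w \<in> words r \<and> w' \<in> words r \<and> change_one 1 2 w w' then 1 else 0)"

text \<open>Divided powers e^{(a)} = e^a / a!, f^{(a)} = f^a / a! (integral operators),
  reduced into the field via of_int.\<close>

definition dpe :: "nat \<Rightarrow> nat \<Rightarrow> nat list \<Rightarrow> nat list \<Rightarrow> 'a::comm_ring_1" where
  "dpe r a = (\<lambda>w w'. of_int (mpow r (e_int r) a w w' div fact a))"

definition dpf :: "nat \<Rightarrow> nat \<Rightarrow> nat list \<Rightarrow> nat list \<Rightarrow> 'a::comm_ring_1" where
  "dpf r a = (\<lambda>w w'. of_int (mpow r (f_int r) a w w' div fact a))"

definition bb :: "nat \<Rightarrow> nat \<Rightarrow> nat \<Rightarrow> nat list \<Rightarrow> nat list \<Rightarrow> 'a::comm_ring_1" where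
  "bb l1 l2 a = (if a \<le> l2 then
      mmul (l1 + l2) (proj (l1 + l2) l1)
        (mmul (l1 + l2) (dpf (l1 + l2) a) (mmul (l1 + l2) (dpe (l1 + l2) a) (proj (l1 + l2) l1)))
    else (\<lambda>_ _. 0))"

definition digit3 :: "nat \<Rightarrow> nat \<Rightarrow> nat" where
  "digit3 x u = x div 3 ^ u mod 3"

definition madd :: "(nat list \<Rightarrow> nat list \<Rightarrow> 'a::comm_ring_1) \<Rightarrow> (nat list \<Rightarrow> nat list \<Rightarrow> 'a)
    \<Rightarrow> (nat list \<Rightarrow> nat list \<Rightarrow> 'a)" where
  "madd A B = (\<lambda>w w'. A w w' + B w w')"

definition msub :: "(nat list \<Rightarrow> nat list \<Rightarrow> 'a::comm_ring_1) \<Rightarrow> (nat list \<Rightarrow> nat list \<Rightarrow> 'a)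
    \<Rightarrow> (nat list \<Rightarrow> nat list \<Rightarrow> 'a)" where
  "msub A B = (\<lambda>w w'. A w w' - B w w')"

text \<open>The cases not
  listed in the paper (g_u > (m+2g)_u) cannot occur when B(m,g) is nonzero mod 3
  (Lucas); there we put the neutral factor 1_\<lambda>.\<close>
definition emg_factor :: "nat \<Rightarrow> nat \<Rightarrow> nat \<Rightarrow> nat list \<Rightarrow> nat list \<Rightarrow> 'a::comm_ring_1" where
  "emg_factor m g u =
    (let a = digit3 (m + 2 * g) u; c = digit3 g u;
         I = proj (m + 2 * g) (m + g);
         B1 = bb (m + g) g (3 ^ u); B2 = bb (m + g) g (2 * 3 ^ u)
     in if c = 0 \<and> a = 0 then msub (madd I B1) B2
        else if c = 1 \<and> a = 2 then msub B2 B1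
        else if c = 0 \<and> a = 1 then msub I B2
        else if c = 2 \<and> a = 2 then B2
        else if c = 0 \<and> a = 2 then madd (msub I B1) B2
        else if c = 1 \<and> a = 1 then msub B1 B2
        else I)"

text \<open>e_{m,g}: product over all digit positions u; for u > m+2g every factor is
  1_\<lambda> + b(3^u) - b(2 3^u) = 1_\<lambda> (as 3^u > g), so the product is finite.\<close>
definition emg :: "nat \<Rightarrow> nat \<Rightarrow> nat list \<Rightarrow> nat list \<Rightarrow> 'a::comm_ring_1" where
  "emg m g = foldr (mmul (m + 2 * g)) (map (emg_factor m g) [0..<m + 2 * g + 1])
                (proj (m + 2 * g) (m + g))"

definition vecs :: "nat \<Rightarrow> (nat list \<Rightarrow> 'a::comm_ring_1) set" where
  "vecs r = {x. \<forall>w. w \<notin> words r \<longrightarrow> x w = 0}"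

definition mapply :: "nat \<Rightarrow> (nat list \<Rightarrow> nat list \<Rightarrow> 'a::comm_ring_1) \<Rightarrow> (nat list \<Rightarrow> 'a)
    \<Rightarrow> (nat list \<Rightarrow> 'a)" where
  "mapply r A x = (\<lambda>w. if w \<in> words r then (\<Sum>w'\<in>words r. A w w' * x w') else 0)"

definition permmod :: "nat \<Rightarrow> nat \<Rightarrow> (nat list \<Rightarrow> 'a::comm_ring_1) set" where
  "permmod r k = {x \<in> vecs r. \<forall>w. x w \<noteq> 0 \<longrightarrow> nones w = k}"

definition place_act :: "nat \<Rightarrow> (nat \<Rightarrow> nat) \<Rightarrow> (nat list \<Rightarrow> 'a::comm_ring_1) \<Rightarrow> (nat list \<Rightarrow> 'a)" where
  "place_act r \<sigma> x = (\<lambda>w. if w \<in> words r then x (map (\<lambda>i. w ! \<sigma> i) [0..<r]) else 0)"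

definition FSr_submodule :: "nat \<Rightarrow> (nat list \<Rightarrow> 'a::comm_ring_1) set \<Rightarrow> bool" where
  "FSr_submodule r X \<longleftrightarrow> X \<subseteq> vecs r \<and> (\<lambda>_. 0) \<in> X \<and>
     (\<forall>x\<in>X. \<forall>y\<in>X. (\<lambda>w. x w + y w) \<in> X) \<and>
     (\<forall>c. \<forall>x\<in>X. (\<lambda>w. c * x w) \<in> X) \<and>
     (\<forall>\<sigma>. \<sigma> permutes {..<r} \<longrightarrow> (\<forall>x\<in>X. place_act r \<sigma> x \<in> X))"

definition FSr_iso :: "nat \<Rightarrow> (nat list \<Rightarrow> 'a::comm_ring_1) set \<Rightarrow> (nat list \<Rightarrow> 'a) set \<Rightarrow> bool" where
  "FSr_iso r X Y \<longleftrightarrow> FSr_submodule r X \<and> FSr_submodule r Y \<and>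
     (\<exists>\<phi>. bij_betw \<phi> X Y \<and>
        (\<forall>x\<in>X. \<forall>y\<in>X. \<phi> (\<lambda>w. x w + y w) = (\<lambda>w. \<phi> x w + \<phi> y w)) \<and>
        (\<forall>c. \<forall>x\<in>X. \<phi> (\<lambda>w. c * x w) = (\<lambda>w. c * \<phi> x w)) \<and>
        (\<forall>\<sigma>. \<sigma> permutes {..<r} \<longrightarrow> (\<forall>x\<in>X. \<phi> (place_act r \<sigma> x) = place_act r \<sigma> (\<phi> x))))"

end

(*
  Encode a basis word of E^(tensor r) by the set of positions carrying v_2. Then e^(a) and f^(a)
  are the 0/1 matrices of the relation "one set contains the other and has a more elements", so
  products of divided powers count chains of sets. Comparing these counts shows that, on a weight
  space, e^(i) f^(j) is an integral combination of the f^(j-t) e^(i-t) with leading coefficient 1,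
  whence b(i) b(j) = sum_t c_t C(i+j-t, i) C(i+j-t, j) b(i+j-t) with c_0 = 1.  When i and j have
  disjoint base-3 digits, Lucas' theorem kills every term with t > 0, so
  b(d 3^u) b(3^(u+1) x) = b(d 3^u + 3^(u+1) x).  Multiplying out e_{m,g} digit by digit thus
  gives sum_i Phi(i) b(i), where Phi(i) is a product of digit coefficients; b(i) = 0 for i > g,
  Phi(i) = 0 for i < g (some digit of i lies below that of g), and Phi(g) = B(m,g) by Lucas, so
  e_{m,g} = B(m,g) b(g) = uv.  Moreover vu = B(m,g) C(r,g) 1_(r,0) = B(m,g)^2 1_(r,0) = 1_(r,0),
  as B(m,g) = +-1 mod 3.  Finally b(g) has rank one: it maps M^lambda onto the line spanned by
  the sum of the basis vectors of M^lambda, a trivial module just like M^(r,0).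
*)

theory Submission
  imports Defs "HOL-Number_Theory.Cong"
begin

section \<open>Basis words as sets of positions\<close>

definition twos :: "nat list \<Rightarrow> nat set" where
  "twos w = {i. i < length w \<and> w ! i = 2}"

definition word_of_set :: "nat \<Rightarrow> nat set \<Rightarrow> nat list" where
  "word_of_set r A = map (\<lambda>i. if i \<in> A then 2 else 1) [0..<r]"

lemma length_words: "w \<in> words r \<Longrightarrow> length w = r"
  by (simp add: words_def)

lemma words_nth: "w \<in> words r \<Longrightarrow> i < r \<Longrightarrow> w ! i = 1 \<or> w ! i = 2"
  unfolding words_def using nth_mem by fastforce

lemma word_of_set_in_words: "word_of_set r A \<in> words r"
  by (auto simp: word_of_set_def words_def)

lemma twos_word_of_set: "A \<subseteq> {..<r} \<Longrightarrow> twos (word_of_set r A) = A"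
  by (auto simp: twos_def word_of_set_def split: if_splits)

lemma word_of_set_twos: "w \<in> words r \<Longrightarrow> word_of_set r (twos w) = w"
proof (rule nth_equalityI)
  fix i assume "w \<in> words r" "i < length (word_of_set r (twos w))"
  then show "word_of_set r (twos w) ! i = w ! i"
    using words_nth[of w r i] by (auto simp: word_of_set_def twos_def length_words)
qed (simp add: word_of_set_def length_words)

lemma twos_subset: "w \<in> words r \<Longrightarrow> twos w \<subseteq> {..<r}"
  by (auto simp: twos_def length_words)

lemma finite_twos [simp]: "finite (twos w)"
  by (auto simp: twos_def)

lemma twos_inject: "w \<in> words r \<Longrightarrow> w' \<in> words r \<Longrightarrow> twos w = twos w' \<longleftrightarrow> w = w'"
  by (metis word_of_set_twos)

lemma bij_betw_twos: "bij_betw twos (words r) (Pow {..<r})"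
proof (rule bij_betw_imageI)
  show "inj_on twos (words r)"
    by (meson inj_onI twos_inject)
  show "twos ` words r = Pow {..<r}"
    using twos_subset twos_word_of_set word_of_set_in_words by (blast intro: image_eqI)
qed

lemma finite_words [simp]: "finite (words r)"
  using bij_betw_finite[OF bij_betw_twos] by simp

lemma sum_words_twos: "(\<Sum>w\<in>words r. h (twos w)) = (\<Sum>A\<in>Pow {..<r}. h A)"
  using sum.reindex_bij_betw[OF bij_betw_twos] .

lemma nones_eq_card_twos: "w \<in> words r \<Longrightarrow> nones w = r - card (twos w)"
proof -
  assume w: "w \<in> words r"
  have "{i. i < length w \<and> w ! i = 1} = {..<r} - twos w"
    using words_nth[OF w] by (auto simp: twos_def length_words[OF w])
  then show ?thesis
    using twos_subset[OF w] by (simp add: nones_def length_filter_conv_card card_Diff_subset)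
qed

lemma nones_iff_card_twos: "w \<in> words r \<Longrightarrow> s \<le> r \<Longrightarrow> nones w = r - s \<longleftrightarrow> card (twos w) = s"
  using nones_eq_card_twos twos_subset by (fastforce dest: card_mono[rotated])

lemma words_with_no_twos: "w \<in> words r \<Longrightarrow> nones w = r \<longleftrightarrow> w = word_of_set r {}"
  using nones_iff_card_twos[of w r 0] twos_inject[OF _ word_of_set_in_words, of w r "{}"]
    twos_word_of_set[of "{}" r] by simp

lemma nones_word_of_set: "A \<subseteq> {..<r} \<Longrightarrow> nones (word_of_set r A) = r - card A"
  using nones_eq_card_twos[OF word_of_set_in_words] twos_word_of_set by metis

section \<open>Counting sets between two sets\<close>

definition extends_by :: "nat set \<Rightarrow> nat set \<Rightarrow> nat \<Rightarrow> bool" where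
  "extends_by X Y a \<longleftrightarrow> Y \<subseteq> X \<and> card (X - Y) = a"

lemma extends_by_0: "extends_by X Y 0 \<longleftrightarrow> X = Y" if "finite X"
  using that by (auto simp: extends_by_def)

lemma extends_by_1_remove: "finite X \<Longrightarrow> extends_by X Y 1 \<longleftrightarrow> (\<exists>i\<in>X. Y = X - {i})"
  by (auto simp: extends_by_def card_1_singleton_iff)

lemma extends_by_1_insert: "extends_by X Y 1 \<longleftrightarrow> (\<exists>i. i \<notin> Y \<and> X = insert i Y)"
  by (auto simp: extends_by_def card_1_singleton_iff)

lemma card_sets_between:
  assumes "finite X" "Y \<subseteq> X"
  shows "card {A. Y \<subseteq> A \<and> A \<subseteq> X \<and> card (A - Y) = b} = card (X - Y) choose b"
proof -
  have "D \<subseteq> X - Y \<Longrightarrow> (D \<union> Y) - Y = D" for D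
    by blast
  then have "bij_betw (\<lambda>D. D \<union> Y) {D. D \<subseteq> X - Y \<and> card D = b} {A. Y \<subseteq> A \<and> A \<subseteq> X \<and> card (A - Y) = b}"
    by (intro bij_betw_byWitness[where f' = "\<lambda>A. A - Y"]) (use assms in auto)
  then show ?thesis
    using assms by (simp add: bij_betw_same_card[symmetric] n_subsets)
qed

lemma card_Diff_chain:
  assumes "finite X" "Y \<subseteq> A" "A \<subseteq> X"
  shows "card (X - Y) = card (X - A) + card (A - Y)"
proof -
  have "X - Y = (X - A) \<union> (A - Y)" "(X - A) \<inter> (A - Y) = {}"
    using assms by auto
  moreover have "finite (X - A)" "finite (A - Y)"
    using assms by (auto intro: finite_subset)
  ultimately show ?thesis
    by (simp add: card_Un_disjoint)
qed

lemma card_chains: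
  assumes "finite X" "X \<subseteq> U"
  shows "card {A \<in> Pow U. extends_by A Y b \<and> extends_by X A a}
     = (if extends_by X Y (a + b) then (a + b) choose b else 0)"
proof -
  have chain: "extends_by A Y b \<and> extends_by X A a \<longleftrightarrow>
      extends_by X Y (a + b) \<and> Y \<subseteq> A \<and> A \<subseteq> X \<and> card (A - Y) = b" for A
  proof (cases "Y \<subseteq> A \<and> A \<subseteq> X")
    case True
    then show ?thesis
      using card_Diff_chain[OF assms(1), of Y A] by (auto simp: extends_by_def)
  qed (auto simp: extends_by_def)
  show ?thesis
  proof (cases "extends_by X Y (a + b)")
    case True
    then have "{A \<in> Pow U. extends_by A Y b \<and> extends_by X A a} = {A. Y \<subseteq> A \<and> A \<subseteq> X \<and> card (A - Y) = b}"
      using assms(2) unfolding chain by blast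
    then show ?thesis
      using card_sets_between[OF assms(1), of Y b] True by (simp add: extends_by_def)
  qed (simp add: chain)
qed

lemma common_supersets:
  assumes "finite U" "X \<subseteq> U" "Z \<subseteq> U"
  shows "{A \<in> Pow U. extends_by A Z i \<and> extends_by A X j}
    = (if card Z + i = card X + j then {A \<in> Pow U. X \<union> Z \<subseteq> A \<and> card A = card X + j} else {})"
proof -
  have "extends_by A Z i \<and> extends_by A X j \<longleftrightarrow>
      card Z + i = card X + j \<and> X \<union> Z \<subseteq> A \<and> card A = card X + j" if "A \<subseteq> U" for A
  proof -
    have "finite A" "finite X" "finite Z"
      using assms that by (auto intro: finite_subset)
    then show ?thesis
      using card_mono[of A X] card_mono[of A Z] by (auto simp: extends_by_def card_Diff_subset)
  qed
  then show ?thesis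
    by auto
qed

lemma card_supersets_of_card:
  assumes "finite U" "Y \<subseteq> U"
  shows "card {A \<in> Pow U. Y \<subseteq> A \<and> card A = n}
    = (if card Y \<le> n then (card U - card Y) choose (n - card Y) else 0)"
proof -
  have "card A = n \<longleftrightarrow> card Y \<le> n \<and> card (A - Y) = n - card Y" if "Y \<subseteq> A" "A \<subseteq> U" for A
  proof -
    have "finite A"
      using assms that by (auto intro: finite_subset)
    then show ?thesis
      using that card_mono[of A Y] by (auto simp: card_Diff_subset finite_subset)
  qed
  then have "{A \<in> Pow U. Y \<subseteq> A \<and> card A = n}
      = (if card Y \<le> n then {A. Y \<subseteq> A \<and> A \<subseteq> U \<and> card (A - Y) = n - card Y} else {})"
    by auto
  then show ?thesis
    using card_sets_between[OF assms(1,2)] assms by (simp add: card_Diff_subset finite_subset)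
qed

lemma common_subsets:
  assumes "finite U" "X \<subseteq> U" "Z \<subseteq> U"
  shows "{A \<in> Pow U. extends_by Z A p \<and> extends_by X A q}
    = (if card Z + q = card X + p \<and> q \<le> card X then {A. A \<subseteq> X \<inter> Z \<and> card A = card X - q} else {})"
proof -
  have "extends_by Z A p \<and> extends_by X A q \<longleftrightarrow>
      card Z + q = card X + p \<and> q \<le> card X \<and> A \<subseteq> X \<inter> Z \<and> card A = card X - q" for A
  proof (cases "A \<subseteq> X \<inter> Z")
    case True
    have "finite X" "finite Z" "finite A"
      using assms True by (auto intro: finite_subset)
    then show ?thesis
      using True card_mono[of X A] card_mono[of Z A] by (auto simp: extends_by_def card_Diff_subset)
  qed (auto simp: extends_by_def)
  then show ?thesis
    using assms(2) by auto
qed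

lemma mmul_outside: "w \<notin> words r \<or> w' \<notin> words r \<Longrightarrow> mmul r A B w w' = 0"
  by (auto simp: mmul_def)

lemma mmul_assoc: "mmul r (mmul r A B) C = mmul r A (mmul r B C)"
  unfolding mmul_def
  by (intro ext) (auto simp: sum_distrib_left sum_distrib_right mult.assoc intro: sum.swap)

lemma mmul_proj_left:
  "mmul r (proj r k) A = (\<lambda>w w'. if w \<in> words r \<and> w' \<in> words r \<and> nones w = k then A w w' else 0)"
proof (intro ext)
  fix w w'
  have "(\<Sum>x\<in>words r. proj r k w x * A x w')
      = (\<Sum>x\<in>words r. if x = w then (if nones w = k then A w w' else 0) else 0)"
    by (rule sum.cong) (auto simp: proj_def)
  then show "mmul r (proj r k) A w w' = (if w \<in> words r \<and> w' \<in> words r \<and> nones w = k then A w w' else 0)"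
    by (simp add: mmul_def sum.delta')
qed

lemma mmul_proj_right:
  "mmul r A (proj r k) = (\<lambda>w w'. if w \<in> words r \<and> w' \<in> words r \<and> nones w' = k then A w w' else 0)"
proof (intro ext)
  fix w w'
  have "(\<Sum>x\<in>words r. A w x * proj r k x w')
      = (\<Sum>x\<in>words r. if x = w' then (if nones w' = k then A w w' else 0) else 0)"
    by (rule sum.cong) (auto simp: proj_def)
  then show "mmul r A (proj r k) w w' = (if w \<in> words r \<and> w' \<in> words r \<and> nones w' = k then A w w' else 0)"
    by (simp add: mmul_def sum.delta')
qed

lemma mmul_sum_left:
  "finite S \<Longrightarrow> mmul r (\<lambda>w w'. \<Sum>t\<in>S. c t * M t w w') B = (\<lambda>w w'. \<Sum>t\<in>S. c t * mmul r (M t) B w w')"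
  unfolding mmul_def
  by (intro ext) (auto simp: sum_distrib_right sum_distrib_left mult.assoc intro: sum.swap)

lemma mmul_sum_right:
  "finite S \<Longrightarrow> mmul r A (\<lambda>w w'. \<Sum>t\<in>S. c t * M t w w') = (\<lambda>w w'. \<Sum>t\<in>S. c t * mmul r A (M t) w w')"
  unfolding mmul_def
  by (intro ext) (auto simp: sum_distrib_right sum_distrib_left mult.left_commute intro: sum.swap)

lemma mmul_scale_left: "mmul r (\<lambda>w w'. c * M w w') B = (\<lambda>w w'. c * mmul r M B w w')"
  unfolding mmul_def by (intro ext) (auto simp: sum_distrib_left mult.assoc)

lemma mmul_scale_right: "mmul r A (\<lambda>w w'. c * M w w') = (\<lambda>w w'. c * mmul r A M w w')"
  unfolding mmul_def by (intro ext) (auto simp: sum_distrib_left mult.left_commute)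

lemma mmul_zero_right: "mmul r A (\<lambda>_ _. 0) = (\<lambda>_ _. 0)"
  by (intro ext) (simp add: mmul_def)

lemma mmul_idm_left: "mmul r (idm r) M = (\<lambda>w w'. if w \<in> words r \<and> w' \<in> words r then M w w' else 0)"
proof (intro ext)
  fix w w'
  have "(\<Sum>x\<in>words r. idm r w x * M x w') = (\<Sum>x\<in>words r. if x = w then (if w \<in> words r then M w w' else 0) else 0)"
    by (rule sum.cong) (auto simp: idm_def)
  then show "mmul r (idm r) M w w' = (if w \<in> words r \<and> w' \<in> words r then M w w' else 0)"
    by (simp add: mmul_def sum.delta')
qed

definition rel_matrix :: "nat \<Rightarrow> (nat set \<Rightarrow> nat set \<Rightarrow> bool) \<Rightarrow> nat list \<Rightarrow> nat list \<Rightarrow> 'a::comm_ring_1" where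
  "rel_matrix r R w w' = (if w \<in> words r \<and> w' \<in> words r \<and> R (twos w) (twos w') then 1 else 0)"

lemma mmul_rel_matrix:
  assumes "w \<in> words r" "w' \<in> words r"
  shows "mmul r (rel_matrix r R) (rel_matrix r S) w w'
    = of_nat (card {A \<in> Pow {..<r}. R (twos w) A \<and> S A (twos w')})"
proof -
  have "mmul r (rel_matrix r R) (rel_matrix r S) w w'
      = (\<Sum>x\<in>words r. (\<lambda>A. if R (twos w) A \<and> S A (twos w') then 1 else 0) (twos x))"
    unfolding mmul_def using assms by (auto intro: sum.cong simp: rel_matrix_def)
  also have "\<dots> = of_nat (card {A \<in> Pow {..<r}. R (twos w) A \<and> S A (twos w')})"
    unfolding sum_words_twos[of "\<lambda>A. if R (twos w) A \<and> S A (twos w') then 1 else 0"]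
    by (simp add: sum.If_cases Int_def)
  finally show ?thesis .
qed

lemma mpow_rel_matrix:
  assumes rel_0: "\<And>X Y. X \<subseteq> {..<r} \<Longrightarrow> Y \<subseteq> {..<r} \<Longrightarrow> R 0 X Y \<longleftrightarrow> X = Y"
    and rel_Suc: "\<And>a X Y. X \<subseteq> {..<r} \<Longrightarrow> Y \<subseteq> {..<r} \<Longrightarrow>
      card {A \<in> Pow {..<r}. R 1 X A \<and> R a A Y} = (if R (Suc a) X Y then Suc a else 0)"
  shows "mpow r (rel_matrix r (R 1)) a = (\<lambda>w w'. fact a * rel_matrix r (R a) w w')"
proof (induction a)
  case 0
  show ?case
    using rel_0 twos_subset twos_inject by (intro ext) (auto simp: idm_def rel_matrix_def)
next
  case (Suc a)
  have step: "mmul r (rel_matrix r (R 1)) (rel_matrix r (R a)) w w' = of_nat (Suc a) * rel_matrix r (R (Suc a)) w w'"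
    for w w' :: "nat list"
  proof (cases "w \<in> words r \<and> w' \<in> words r")
    case True
    then show ?thesis
      using rel_Suc[of "twos w" "twos w'" a] twos_subset
      by (simp add: mmul_rel_matrix rel_matrix_def)
  qed (auto simp: mmul_outside rel_matrix_def)
  show ?case
    by (intro ext) (simp only: mpow.simps Suc.IH mmul_scale_right step fact_Suc of_nat_mult mult_ac)
qed

section \<open>Divided powers\<close>

lemma change_one_iff_twos:
  assumes w: "w \<in> words r" and w': "w' \<in> words r" and b: "b \<in> {1, 2}"
  shows "change_one a b w w' \<longleftrightarrow> (\<exists>i<r. w' ! i = a \<and> twos w = twos (w'[i := b]))"
proof -
  have "w'[i := b] \<in> words r" for i
    using w' b unfolding words_def by (auto dest: subsetD[OF set_update_subset_insert])
  then have "w = w'[i := b] \<longleftrightarrow> twos w = twos (w'[i := b])" for i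
    using twos_inject[OF w] by blast
  then show ?thesis
    by (simp add: change_one_def length_words[OF w] length_words[OF w'])
qed

lemma change_one_21_iff:
  assumes w: "w \<in> words r" and w': "w' \<in> words r"
  shows "change_one 2 1 w w' \<longleftrightarrow> extends_by (twos w') (twos w) 1"
proof -
  have "twos (w'[i := 1]) = twos w' - {i}" for i
    by (cases "i < length w'") (auto simp: twos_def nth_list_update)
  moreover have "i < r \<and> w' ! i = 2 \<longleftrightarrow> i \<in> twos w'" for i
    by (simp add: twos_def length_words[OF w'])
  moreover have "change_one 2 1 w w' \<longleftrightarrow> (\<exists>i<r. w' ! i = 2 \<and> twos w = twos (w'[i := 1]))"
    by (rule change_one_iff_twos[OF w w']) simp
  ultimately show ?thesis
    unfolding extends_by_1_remove[OF finite_twos] by metis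
qed

lemma change_one_12_iff:
  assumes w: "w \<in> words r" and w': "w' \<in> words r"
  shows "change_one 1 2 w w' \<longleftrightarrow> extends_by (twos w) (twos w') 1"
proof -
  have "i < r \<Longrightarrow> twos (w'[i := 2]) = insert i (twos w')" for i
    by (auto simp: twos_def nth_list_update length_words[OF w'])
  moreover have "i < r \<and> w' ! i = 1 \<longleftrightarrow> i \<notin> twos w' \<and> i < r" for i
    using words_nth[OF w', of i] by (auto simp: twos_def length_words[OF w'])
  moreover have "i \<in> twos w \<Longrightarrow> i < r" for i
    using twos_subset[OF w] by auto
  moreover have "change_one 1 2 w w' \<longleftrightarrow> (\<exists>i<r. w' ! i = 1 \<and> twos w = twos (w'[i := 2]))"
    by (rule change_one_iff_twos[OF w w']) simp
  ultimately show ?thesis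
    unfolding extends_by_1_insert by (metis insertI1)
qed

lemma e_int_rel_matrix: "e_int r = rel_matrix r (\<lambda>Y X. extends_by X Y 1)"
  unfolding e_int_def rel_matrix_def using change_one_21_iff by (intro ext) auto

lemma f_int_rel_matrix: "f_int r = rel_matrix r (\<lambda>X Y. extends_by X Y 1)"
  unfolding f_int_def rel_matrix_def using change_one_12_iff by (intro ext) auto

lemma of_int_rel_matrix: "of_int (rel_matrix r R w w') = rel_matrix r R w w'"
  by (simp add: rel_matrix_def)

lemma dpe_eq: "dpe r a = rel_matrix r (\<lambda>Y X. extends_by X Y a)"
proof -
  have "mpow r (e_int r) a = (\<lambda>w w'. fact a * rel_matrix r (\<lambda>Y X. extends_by X Y a) w w')"
    unfolding e_int_rel_matrix
  proof (rule mpow_rel_matrix[where R = "\<lambda>a Y X. extends_by X Y a"])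
    fix a X Y assume "X \<subseteq> {..<r}" "Y \<subseteq> {..<r}"
    then show "card {A \<in> Pow {..<r}. extends_by A X 1 \<and> extends_by Y A a}
        = (if extends_by Y X (Suc a) then Suc a else 0)"
      using card_chains[of Y "{..<r}" X 1 a] by (simp add: finite_subset)
  qed (auto simp: extends_by_0 finite_subset)
  then show ?thesis
    unfolding dpe_def by (simp add: of_int_rel_matrix nonzero_mult_div_cancel_left[OF fact_nonzero])
qed

lemma dpf_eq: "dpf r a = rel_matrix r (\<lambda>X Y. extends_by X Y a)"
proof -
  have "mpow r (f_int r) a = (\<lambda>w w'. fact a * rel_matrix r (\<lambda>X Y. extends_by X Y a) w w')"
    unfolding f_int_rel_matrix
  proof (rule mpow_rel_matrix[where R = "\<lambda>a X Y. extends_by X Y a"])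
    fix a X Y assume "X \<subseteq> {..<r}" "Y \<subseteq> {..<r}"
    moreover have "{A \<in> Pow {..<r}. extends_by X A 1 \<and> extends_by A Y a}
        = {A \<in> Pow {..<r}. extends_by A Y a \<and> extends_by X A 1}"
      by blast
    ultimately show "card {A \<in> Pow {..<r}. extends_by X A 1 \<and> extends_by A Y a}
        = (if extends_by X Y (Suc a) then Suc a else 0)"
      using card_chains[of X "{..<r}" Y a 1] by (simp add: finite_subset)
  qed (simp add: extends_by_0 finite_subset)
  then show ?thesis
    unfolding dpf_def by (simp add: of_int_rel_matrix nonzero_mult_div_cancel_left[OF fact_nonzero])
qed

lemma dpe_0: "dpe r 0 = idm r"
  by (intro ext) (auto simp: dpe_eq rel_matrix_def extends_by_0 idm_def twos_inject)

lemma dpf_0: "dpf r 0 = idm r"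
  by (intro ext) (auto simp: dpf_eq rel_matrix_def extends_by_0 idm_def twos_inject)

lemma binomial_add_swap: "(a + b) choose b = (a + b) choose (a::nat)"
  using binomial_symmetric[of a "a + b"] by simp

lemma dpe_mult: "mmul r (dpe r a) (dpe r b) = (\<lambda>w w'. of_nat ((a + b) choose a) * dpe r (a + b) w w')"
proof (intro ext)
  fix w w'
  show "mmul r (dpe r a) (dpe r b) w w' = of_nat ((a + b) choose a) * dpe r (a + b) w w'"
  proof (cases "w \<in> words r \<and> w' \<in> words r")
    case True
    then show ?thesis
      using card_chains[of "twos w'" "{..<r}" "twos w" a b] twos_subset
      by (simp add: dpe_eq mmul_rel_matrix rel_matrix_def add.commute)
  qed (auto simp: mmul_outside dpe_eq rel_matrix_def)
qed

lemma dpf_mult: "mmul r (dpf r a) (dpf r b) = (\<lambda>w w'. of_nat ((a + b) choose a) * dpf r (a + b) w w')"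
proof (intro ext)
  fix w w'
  show "mmul r (dpf r a) (dpf r b) w w' = of_nat ((a + b) choose a) * dpf r (a + b) w w'"
  proof (cases "w \<in> words r \<and> w' \<in> words r")
    case True
    have "{A \<in> Pow {..<r}. extends_by (twos w) A a \<and> extends_by A (twos w') b}
        = {A \<in> Pow {..<r}. extends_by A (twos w') b \<and> extends_by (twos w) A a}"
      by blast
    then show ?thesis
      using True card_chains[of "twos w" "{..<r}" "twos w'" b a] twos_subset
      by (simp add: dpf_eq mmul_rel_matrix rel_matrix_def binomial_add_swap)
  qed (auto simp: mmul_outside dpf_eq rel_matrix_def)
qed

lemma dpe_dpf_entry:
  assumes "w \<in> words r" "w' \<in> words r"
  shows "mmul r (dpe r i) (dpf r j) w w'
    = of_nat (card {A \<in> Pow {..<r}. extends_by A (twos w) i \<and> extends_by A (twos w') j})"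
  using assms by (simp add: dpe_eq dpf_eq mmul_rel_matrix)

lemma dpf_dpe_entry:
  assumes "w \<in> words r" "w' \<in> words r"
  shows "mmul r (dpf r p) (dpe r q) w w' = of_nat
    (if card (twos w) + q = card (twos w') + p \<and> q \<le> card (twos w')
     then card (twos w' \<inter> twos w) choose (card (twos w') - q) else 0)"
  using assms common_subsets[of "{..<r}" "twos w'" "twos w" p q] twos_subset
    n_subsets[of "twos w' \<inter> twos w" "card (twos w') - q"]
  by (simp add: dpe_eq dpf_eq mmul_rel_matrix)

lemma dpe_dpf_entry_weight:
  assumes w: "w \<in> words r" and w': "w' \<in> words r"
    and s: "card (twos w') = s" and k: "card (twos w' \<inter> twos w) = k"
  shows "mmul r (dpe r i) (dpf r j) w w' = of_nat
    (if card (twos w) + i = s + j \<and> s \<le> k + i then (r + k + i - (2 * s + j)) choose (k + i - s) else 0)"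
proof (cases "card (twos w) + i = s + j")
  case True
  let ?Y = "twos w' \<union> twos w"
  have union: "card ?Y + k = s + card (twos w)"
    using card_Un_Int[of "twos w'" "twos w"] s k by simp
  have "card ?Y \<le> r"
    using card_mono[of "{..<r}" ?Y] twos_subset[OF w] twos_subset[OF w'] by auto
  then have count: "(if card ?Y \<le> s + j then (r - card ?Y) choose (s + j - card ?Y) else 0)
      = (if s \<le> k + i then (r + k + i - (2 * s + j)) choose (k + i - s) else 0)"
    using union True by (auto simp: not_le intro!: arg_cong2[where f = "(choose)"])
  have "mmul r (dpe r i) (dpf r j) w w'
      = of_nat (if card ?Y \<le> s + j then (r - card ?Y) choose (s + j - card ?Y) else 0)"
    unfolding dpe_dpf_entry[OF w w'] common_supersets[OF finite_lessThan twos_subset[OF w'] twos_subset[OF w]]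
    using card_supersets_of_card[of "{..<r}" ?Y "s + j"] twos_subset[OF w] twos_subset[OF w'] s True
    by simp
  with True show ?thesis
    unfolding count by simp
next
  case False
  then show ?thesis
    unfolding dpe_dpf_entry[OF w w'] common_supersets[OF finite_lessThan twos_subset[OF w'] twos_subset[OF w]]
    using s by simp
qed

lemma dpf_dpe_entry_weight:
  assumes w: "w \<in> words r" and w': "w' \<in> words r"
    and s: "card (twos w') = s" and k: "card (twos w' \<inter> twos w) = k" and t: "t \<le> min i j"
  shows "mmul r (dpf r (j - t)) (dpe r (i - t)) w w'
    = of_nat (if card (twos w) + i = s + j \<and> i \<le> s + t then k choose (s + t - i) else 0)"
  using s k t by (simp add: dpf_dpe_entry[OF w w']) (auto simp: Suc_diff_le)

section \<open>Straightening\<close>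

lemma binomial_basis_expansion:
  fixes G :: "nat \<Rightarrow> int"
  assumes "k0 \<le> K"
  shows "\<exists>d. d k0 = G k0 \<and> (\<forall>k\<in>{k0..K}. G k = (\<Sum>p\<in>{k0..K}. d p * of_nat (k choose p)))"
  using assms
proof (induction K rule: dec_induct)
  case base
  show ?case
    by (rule exI[of _ "\<lambda>_. G k0"]) simp
next
  case (step n)
  then obtain d where d: "d k0 = G k0" "\<forall>k\<in>{k0..n}. G k = (\<Sum>p\<in>{k0..n}. d p * of_nat (k choose p))"
    by blast
  define d' where "d' = d(Suc n := G (Suc n) - (\<Sum>p\<in>{k0..n}. d p * of_nat (Suc n choose p)))"
  have split: "(\<Sum>p\<in>{k0..Suc n}. d' p * of_nat (k choose p))
      = d' (Suc n) * of_nat (k choose Suc n) + (\<Sum>p\<in>{k0..n}. d p * of_nat (k choose p))" for k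
  proof -
    have "{k0..Suc n} = insert (Suc n) {k0..n}"
      using step(1) by auto
    moreover have "(\<Sum>p\<in>{k0..n}. d' p * of_nat (k choose p)) = (\<Sum>p\<in>{k0..n}. d p * of_nat (k choose p))"
      by (rule sum.cong) (auto simp: d'_def)
    ultimately show ?thesis
      by simp
  qed
  have "G k = (\<Sum>p\<in>{k0..Suc n}. d' p * of_nat (k choose p))" if "k \<in> {k0..Suc n}" for k
    using that d(2) unfolding split by (cases "k = Suc n") (auto simp: d'_def)
  moreover have "d' k0 = G k0"
    using d step(1) by (simp add: d'_def)
  ultimately show ?case
    by blast
qed

(* The left side is the entry of e^(i) f^(j), the binomials on the right are those of
   f^(j-t) e^(i-t), at two words of weight s whose sets of 2-positions share k elements. *)
lemma straightening_coefficients: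
  fixes r s i j :: nat
  shows "\<exists>c::nat \<Rightarrow> int. (i \<le> s \<longrightarrow> c 0 = 1) \<and> (\<forall>k \<le> min s (s + j - i). i \<le> s + j \<longrightarrow>
     int (if s \<le> k + i then (r + k + i - (2 * s + j)) choose (k + i - s) else 0)
       = (\<Sum>t\<le>min i j. c t * int (if i \<le> s + t then k choose (s + t - i) else 0)))"
proof (cases "i \<le> s + j")
  case True
  define k0 where "k0 = s - i"
  define K where "K = min s (s + j - i)"
  define F where "F k = (if s \<le> k + i then (r + k + i - (2 * s + j)) choose (k + i - s) else 0)" for k
  have "k0 \<le> K"
    using True by (simp add: k0_def K_def)
  then obtain d where d: "d k0 = int (F k0)"
    "\<forall>k\<in>{k0..K}. int (F k) = (\<Sum>p\<in>{k0..K}. d p * of_nat (k choose p))"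
    using binomial_basis_expansion[of k0 K "\<lambda>k. int (F k)"] by blast
  define c where "c t = d (s + t - i)" for t
  have "int (F k) = (\<Sum>t\<le>min i j. c t * int (if i \<le> s + t then k choose (s + t - i) else 0))"
    if "k \<le> K" for k
  proof -
    have "(\<Sum>t\<le>min i j. c t * int (if i \<le> s + t then k choose (s + t - i) else 0))
        = (\<Sum>t\<in>{..min i j}. if i \<le> s + t then d (s + t - i) * int (k choose (s + t - i)) else 0)"
      by (rule sum.cong) (auto simp: c_def)
    also have "\<dots> = (\<Sum>t\<in>{t \<in> {..min i j}. i \<le> s + t}. d (s + t - i) * int (k choose (s + t - i)))"
      by (rule sum.inter_filter[symmetric]) simp
    also have "\<dots> = (\<Sum>p\<in>{k0..K}. d p * int (k choose p))"
      by (rule sum.reindex_bij_witness[of _ "\<lambda>p. p + i - s" "\<lambda>t. s + t - i"])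
         (use True in \<open>auto simp: k0_def K_def\<close>)
    also have "\<dots> = int (F k)"
      using d(2) that by (cases "k0 \<le> k") (auto simp: F_def k0_def intro!: sum.neutral)
    finally show ?thesis ..
  qed
  moreover have "i \<le> s \<Longrightarrow> c 0 = 1"
    using d(1) by (simp add: c_def k0_def F_def)
  ultimately show ?thesis
    unfolding F_def K_def by blast
qed (intro exI[of _ "\<lambda>_. 1"], simp)

lemma dpe_dpf_entry_eq_sum:
  assumes c: "\<forall>k \<le> min s (s + j - i). i \<le> s + j \<longrightarrow>
     int (if s \<le> k + i then (r + k + i - (2 * s + j)) choose (k + i - s) else 0)
       = (\<Sum>t\<le>min i j. c t * int (if i \<le> s + t then k choose (s + t - i) else 0))"
    and w: "w \<in> words r" and w': "w' \<in> words r" and s: "card (twos w') = s"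
  shows "mmul r (dpe r i) (dpf r j) w w'
    = (\<Sum>t\<le>min i j. of_int (c t) * mmul r (dpf r (j - t)) (dpe r (i - t)) w w')"
proof -
  define k where "k = card (twos w' \<inter> twos w)"
  note lhs = dpe_dpf_entry_weight[OF w w' s k_def[symmetric]]
  note rhs = dpf_dpe_entry_weight[OF w w' s k_def[symmetric]]
  show ?thesis
  proof (cases "card (twos w) + i = s + j")
    case True
    have "k \<le> min s (s + j - i)"
      using card_mono[of "twos w'" "twos w' \<inter> twos w"] card_mono[of "twos w" "twos w' \<inter> twos w"] s True
      by (auto simp: k_def)
    with c True have c_k: "of_int (int (if s \<le> k + i then (r + k + i - (2 * s + j)) choose (k + i - s) else 0))
        = of_int (\<Sum>t\<le>min i j. c t * int (if i \<le> s + t then k choose (s + t - i) else 0))"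
      by simp
    have "mmul r (dpe r i) (dpf r j) w w'
        = of_nat (if s \<le> k + i then (r + k + i - (2 * s + j)) choose (k + i - s) else 0)"
      unfolding lhs by (simp only: True simp_thms)
    also have "\<dots> = (\<Sum>t\<le>min i j. of_int (c t) * of_nat (if i \<le> s + t then k choose (s + t - i) else 0))"
      using c_k by (simp only: of_int_of_nat_eq of_int_sum of_int_mult)
    also have "\<dots> = (\<Sum>t\<le>min i j. of_int (c t) * mmul r (dpf r (j - t)) (dpe r (i - t)) w w')"
      using True by (intro sum.cong) (simp_all add: rhs)
    finally show ?thesis .
  qed (simp add: lhs rhs)
qed

lemma dpe_dpf_straighten:
  "\<exists>c::nat \<Rightarrow> int. (i \<le> s \<longrightarrow> c 0 = 1) \<and> (\<forall>w w'. w' \<in> words r \<longrightarrow> card (twos w') = s \<longrightarrow>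
     mmul r (dpe r i) (dpf r j) w w' = (\<Sum>t\<le>min i j. of_int (c t) * mmul r (dpf r (j - t)) (dpe r (i - t)) w w'))"
proof -
  obtain c :: "nat \<Rightarrow> int" where c0: "i \<le> s \<longrightarrow> c 0 = 1"
    and c: "\<forall>k \<le> min s (s + j - i). i \<le> s + j \<longrightarrow>
      int (if s \<le> k + i then (r + k + i - (2 * s + j)) choose (k + i - s) else 0)
       = (\<Sum>t\<le>min i j. c t * int (if i \<le> s + t then k choose (s + t - i) else 0))"
    using straightening_coefficients[of i s j r] by blast
  have "mmul r (dpe r i) (dpf r j) w w' = (\<Sum>t\<le>min i j. of_int (c t) * mmul r (dpf r (j - t)) (dpe r (i - t)) w w')"
    if "w' \<in> words r" "card (twos w') = s" for w w'
    using dpe_dpf_entry_eq_sum[OF c _ that] by (cases "w \<in> words r") (simp_all add: mmul_outside)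
  with c0 show ?thesis
    by blast
qed

definition rows_of_weight :: "nat \<Rightarrow> nat \<Rightarrow> (nat list \<Rightarrow> nat list \<Rightarrow> 'a::comm_ring_1) \<Rightarrow> bool" where
  "rows_of_weight r s M \<longleftrightarrow> (\<forall>w w'. M w w' \<noteq> 0 \<longrightarrow> w \<in> words r \<and> w' \<in> words r \<and> card (twos w) = s)"

lemma mmul_nonzeroD:
  assumes "mmul r A B w w' \<noteq> 0"
  shows "w \<in> words r \<and> w' \<in> words r \<and> (\<exists>x\<in>words r. A w x \<noteq> 0 \<and> B x w' \<noteq> 0)"
proof -
  have words: "w \<in> words r \<and> w' \<in> words r"
    using assms by (auto simp: mmul_def split: if_splits)
  then have "(\<Sum>x\<in>words r. A w x * B x w') \<noteq> 0"
    using assms by (simp add: mmul_def)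
  then obtain x where "x \<in> words r" "A w x * B x w' \<noteq> 0"
    by (meson sum.neutral)
  then show ?thesis
    using words by (metis mult_zero_left mult_zero_right)
qed

lemma dpe_nonzeroD: "dpe r a w x \<noteq> 0 \<Longrightarrow> twos w \<subseteq> twos x \<and> card (twos x) = card (twos w) + a"
  by (auto simp: dpe_eq rel_matrix_def extends_by_def card_Diff_subset card_mono split: if_splits)

lemma dpf_nonzeroD: "dpf r a w x \<noteq> 0 \<Longrightarrow> twos x \<subseteq> twos w \<and> card (twos w) = card (twos x) + a"
  by (auto simp: dpf_eq rel_matrix_def extends_by_def card_Diff_subset card_mono split: if_splits)

lemma rows_of_weight_dpe:
  assumes "rows_of_weight r s M"
  shows "rows_of_weight r (s - a) (mmul r (dpe r a) M)"
  unfolding rows_of_weight_def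
proof (intro allI impI)
  fix w w' assume "mmul r (dpe r a) M w w' \<noteq> 0"
  then obtain x where "w \<in> words r" "w' \<in> words r" "dpe r a w x \<noteq> (0::'a)" "M x w' \<noteq> 0"
    using mmul_nonzeroD by blast
  then show "w \<in> words r \<and> w' \<in> words r \<and> card (twos w) = s - a"
    using assms dpe_nonzeroD by (fastforce simp: rows_of_weight_def)
qed

lemma dpe_mult_eq_0:
  assumes "rows_of_weight r s M" "s < a"
  shows "mmul r (dpe r a) M = (\<lambda>_ _. 0)"
proof (intro ext, rule ccontr)
  fix w w' assume "mmul r (dpe r a) M w w' \<noteq> 0"
  then obtain x where "dpe r a w x \<noteq> (0::'a)" "M x w' \<noteq> 0"
    using mmul_nonzeroD by blast
  then show False
    using assms dpe_nonzeroD by (fastforce simp: rows_of_weight_def)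
qed

lemma rows_of_weight_dpf:
  assumes "rows_of_weight r s M"
  shows "rows_of_weight r (s + a) (mmul r (dpf r a) M)"
  unfolding rows_of_weight_def
proof (intro allI impI)
  fix w w' assume "mmul r (dpf r a) M w w' \<noteq> 0"
  then obtain x where "w \<in> words r" "w' \<in> words r" "dpf r a w x \<noteq> (0::'a)" "M x w' \<noteq> 0"
    using mmul_nonzeroD by blast
  then show "w \<in> words r \<and> w' \<in> words r \<and> card (twos w) = s + a"
    using assms dpf_nonzeroD by (fastforce simp: rows_of_weight_def)
qed

lemma proj_mult_absorb:
  assumes "rows_of_weight r s M" "s \<le> r"
  shows "mmul r (proj r (r - s)) M = M"
proof (rule ext, rule ext)
  fix w w'
  show "mmul r (proj r (r - s)) M w w' = M w w'"
    unfolding mmul_proj_left using assms nones_iff_card_twos[of w r s] by (auto simp: rows_of_weight_def)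
qed

lemma rows_of_weight_proj: "s \<le> r \<Longrightarrow> rows_of_weight r s (proj r (r - s) :: nat list \<Rightarrow> nat list \<Rightarrow> 'a::comm_ring_1)"
  unfolding rows_of_weight_def proj_def using nones_iff_card_twos by (auto split: if_splits)

lemma mmul_cong_rows_of_weight:
  assumes "rows_of_weight r s M" "\<And>w x. x \<in> words r \<Longrightarrow> card (twos x) = s \<Longrightarrow> A w x = B w x"
  shows "mmul r A M = mmul r B M"
  unfolding mmul_def
proof (intro ext)
  fix w w'
  have "(\<Sum>x\<in>words r. A w x * M x w') = (\<Sum>x\<in>words r. B w x * M x w')"
  proof (rule sum.cong)
    fix x assume x: "x \<in> words r"
    show "A w x * M x w' = B w x * M x w'"
    proof (cases "M x w' = 0")
      case False
      then have "card (twos x) = s"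
        using assms(1) by (auto simp: rows_of_weight_def)
      then show ?thesis
        using assms(2)[OF x] by simp
    qed simp
  qed simp
  then show "(if w \<in> words r \<and> w' \<in> words r then \<Sum>x\<in>words r. A w x * M x w' else 0) =
      (if w \<in> words r \<and> w' \<in> words r then \<Sum>x\<in>words r. B w x * M x w' else 0)"
    by simp
qed

definition bmat :: "nat \<Rightarrow> nat \<Rightarrow> nat \<Rightarrow> nat list \<Rightarrow> nat list \<Rightarrow> 'a::comm_ring_1" where
  "bmat r g a = mmul r (proj r (r - g)) (mmul r (dpf r a) (mmul r (dpe r a) (proj r (r - g))))"

lemma bmat_eq_0:
  assumes "g \<le> r" "g < a"
  shows "bmat r g a = (\<lambda>_ _. 0)"
proof -
  have "mmul r (dpe r a) (proj r (r - g)) = (\<lambda>_ _. (0::'a))"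
    by (rule dpe_mult_eq_0[OF rows_of_weight_proj[OF assms(1)] assms(2)])
  then show ?thesis
    unfolding bmat_def by (simp add: mmul_zero_right)
qed

lemma bmat_0: "bmat r g 0 = proj r (r - g)"
  unfolding bmat_def dpe_0 dpf_0 mmul_idm_left mmul_proj_left
  by (intro ext) (auto simp: proj_def)

lemma proj_eq_bmat_0: "proj (m + 2 * g) (m + g) = bmat (m + 2 * g) g 0"
  by (simp add: bmat_0 add.commute)

lemma bb_eq_bmat: "bb (m + g) g a = (bmat (m + 2 * g) g a :: nat list \<Rightarrow> nat list \<Rightarrow> 'a::comm_ring_1)"
proof (cases "a \<le> g")
  case True
  have r: "m + g + g = m + 2 * g" "m + 2 * g - g = m + g"
    by simp_all
  show ?thesis
    unfolding bb_def bmat_def r using True by simp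
next
  case False
  then have "bmat (m + 2 * g) g a = (\<lambda>_ _. (0::'a::comm_ring_1))"
    by (intro bmat_eq_0) simp_all
  then show ?thesis
    unfolding bb_def using False by simp
qed

lemma bmat_mult_term:
  fixes r g i j t :: nat
  assumes "t \<le> min i j"
  defines "P \<equiv> proj r (r - g)"
  shows "mmul r P (mmul r (dpf r i) (mmul r (mmul r (dpf r (j - t)) (dpe r (i - t))) (mmul r (dpe r j) P)))
    = (\<lambda>w w'. of_nat (((i + j - t) choose i) * ((i + j - t) choose j)) * (bmat r g (i + j - t) w w' :: 'a::comm_ring_1))"
proof -
  have "i - t + j = i + j - t" "i + (j - t) = i + j - t"
    using assms(1) by auto
  moreover have "(i + j - t) choose (i - t) = (i + j - t) choose j"
    using assms(1) binomial_add_swap[of j "i - t"] by (simp add: add.commute)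
  ultimately have "mmul r P (mmul r (dpf r i) (mmul r (mmul r (dpf r (j - t)) (dpe r (i - t))) (mmul r (dpe r j) P)))
      = mmul r P (mmul r (mmul r (dpf r i) (dpf r (j - t))) (mmul r (mmul r (dpe r (i - t)) (dpe r j)) P))"
    by (simp only: mmul_assoc)
  also have "\<dots> = (\<lambda>w w'. of_nat ((i + j - t) choose i) * (of_nat ((i + j - t) choose j) * bmat r g (i + j - t) w w'))"
    unfolding dpe_mult dpf_mult \<open>i - t + j = i + j - t\<close> \<open>i + (j - t) = i + j - t\<close>
      \<open>(i + j - t) choose (i - t) = (i + j - t) choose j\<close>
    by (simp only: P_def bmat_def mmul_scale_left mmul_scale_right)
  finally show ?thesis
    by (simp add: mult.assoc)
qed

lemma bmat_mult:
  assumes gr: "g \<le> r"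
  shows "\<exists>c::nat \<Rightarrow> int. (i + j \<le> g \<longrightarrow> c 0 = 1) \<and> mmul r (bmat r g i) (bmat r g j) =
     (\<lambda>w w'. \<Sum>t\<le>min i j. of_int (c t) * of_nat (((i + j - t) choose i) * ((i + j - t) choose j))
        * (bmat r g (i + j - t) w w' :: 'a::comm_ring_1))"
proof (cases "j \<le> g")
  case False
  then have "bmat r g j = (\<lambda>_ _. (0::'a))"
    by (intro bmat_eq_0[OF gr]) simp
  then show ?thesis
    using False by (intro exI[of _ "\<lambda>_. 0"]) (auto simp: mmul_zero_right)
next
  case True
  define P :: "nat list \<Rightarrow> nat list \<Rightarrow> 'a" where "P = proj r (r - g)"
  define E where "E = mmul r (dpe r j) P"
  obtain c :: "nat \<Rightarrow> int" where c0: "i \<le> g - j \<longrightarrow> c 0 = 1"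
    and c: "\<forall>w w'. w' \<in> words r \<longrightarrow> card (twos w') = g - j \<longrightarrow>
      mmul r (dpe r i) (dpf r j) w w' = (\<Sum>t\<le>min i j. of_int (c t) * (mmul r (dpf r (j - t)) (dpe r (i - t)) w w' :: 'a))"
    using dpe_dpf_straighten[of i "g - j" r j] by blast
  have rows_E: "rows_of_weight r (g - j) E"
    unfolding E_def P_def by (rule rows_of_weight_dpe[OF rows_of_weight_proj[OF gr]])
  have "rows_of_weight r g (mmul r (dpf r j) E)"
    using rows_of_weight_dpf[OF rows_E, of j] True by simp
  then have absorb: "mmul r P (mmul r (dpf r j) E) = mmul r (dpf r j) E"
    unfolding P_def by (rule proj_mult_absorb[OF _ gr])
  have "mmul r (bmat r g i) (bmat r g j) = mmul r P (mmul r (dpf r i) (mmul r (mmul r (dpe r i) (dpf r j)) E))"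
    by (simp only: bmat_def P_def[symmetric] E_def[symmetric] mmul_assoc absorb)
  also have "mmul r (mmul r (dpe r i) (dpf r j)) E
      = mmul r (\<lambda>w w'. \<Sum>t\<le>min i j. of_int (c t) * mmul r (dpf r (j - t)) (dpe r (i - t)) w w') E"
    by (rule mmul_cong_rows_of_weight[OF rows_E]) (use c in auto)
  also have "mmul r P (mmul r (dpf r i) \<dots>) = (\<lambda>w w'. \<Sum>t\<le>min i j. of_int (c t) *
      mmul r P (mmul r (dpf r i) (mmul r (mmul r (dpf r (j - t)) (dpe r (i - t))) E)) w w')"
    by (simp only: mmul_sum_left mmul_sum_right finite_atMost)
  also have "\<dots> = (\<lambda>w w'. \<Sum>t\<le>min i j. of_int (c t) * of_nat (((i + j - t) choose i) * ((i + j - t) choose j))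
        * bmat r g (i + j - t) w w')"
    unfolding E_def P_def by (intro ext sum.cong refl) (simp add: bmat_mult_term mult.assoc)
  finally show ?thesis
    using c0 by (intro exI[of _ c]) auto
qed

section \<open>Base-3 digits and Lucas' theorem\<close>

lemma three_eq_0: "CHAR('a::comm_ring_1) = 3 \<Longrightarrow> (3::'a) = 0"
  using of_nat_eq_0_iff_char_dvd[of 3, where 'a='a] by simp

lemma digit3_0: "digit3 n 0 = n mod 3"
  by (simp add: digit3_def)

lemma digit3_Suc: "digit3 (n div 3) u = digit3 n (Suc u)"
  by (simp add: digit3_def div_mult2_eq)

lemma digit3_lt: "digit3 x v < 3"
  by (simp add: digit3_def)

lemma digit3_lowadd: "d < 3 \<Longrightarrow> digit3 (d + 3 * i) 0 = d"
  by (simp add: digit3_def)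

lemma digit3_shift: "d < 3 \<Longrightarrow> digit3 (d + 3 * i) (Suc v) = digit3 i v"
  using digit3_Suc[of "d + 3 * i" v] by simp

lemma less_power3: "n < (3::nat) ^ n"
  by (induction n) auto

lemma digitwise_le_imp_le:
  "(\<forall>v<N. digit3 g v \<le> digit3 i v) \<Longrightarrow> g < 3 ^ N \<Longrightarrow> g \<le> i"
proof (induction N arbitrary: g i)
  case (Suc N)
  have "\<forall>v<N. digit3 (g div 3) v \<le> digit3 (i div 3) v"
    using Suc.prems(1) by (auto simp: digit3_Suc)
  moreover have "g div 3 < 3 ^ N"
    using Suc.prems(2) by (simp add: div_less_iff_less_mult)
  ultimately have "g div 3 \<le> i div 3"
    using Suc.IH by blast
  moreover have "g mod 3 \<le> i mod 3"
    using Suc.prems(1)[rule_format, of 0] by (simp add: digit3_0)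
  ultimately show ?case
    using div_mult_mod_eq[of g 3] div_mult_mod_eq[of i 3] by linarith
qed simp

lemma lucas_pascal:
  fixes n k :: nat
  assumes three: "(3::'a::comm_ring_1) = 0"
  shows "(of_nat (Suc n div 3 choose Suc k div 3) * of_nat (Suc n mod 3 choose Suc k mod 3) :: 'a)
    = of_nat (n div 3 choose k div 3) * of_nat (n mod 3 choose k mod 3)
      + of_nat (n div 3 choose Suc k div 3) * of_nat (n mod 3 choose Suc k mod 3)"
proof -
  obtain a b where n: "n = 3 * a + b" "b < 3"
    by (intro that[of "n div 3" "n mod 3"]) simp_all
  obtain c e where k: "k = 3 * c + e" "e < 3"
    by (intro that[of "k div 3" "k mod 3"]) simp_all
  have n_digits: "n div 3 = a" "n mod 3 = b" "Suc n div 3 = (if b = 2 then Suc a else a)"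
      "Suc n mod 3 = (if b = 2 then 0 else Suc b)"
    using n by auto
  have k_digits: "k div 3 = c" "k mod 3 = e" "Suc k div 3 = (if e = 2 then Suc c else c)"
      "Suc k mod 3 = (if e = 2 then 0 else Suc e)"
    using k by auto
  have triple: "x + x * 2 = 0" "x * 2 + x = 0" for x :: 'a
  proof -
    have "x + x * 2 = x * 3"
      by (simp add: algebra_simps numeral_3_eq_3 numeral_2_eq_2)
    then show "x + x * 2 = 0" "x * 2 + x = 0"
      using three by (simp_all add: add.commute)
  qed
  have "b = 0 \<or> b = 1 \<or> b = 2" "e = 0 \<or> e = 1 \<or> e = 2"
    using n(2) k(2) by auto
  then show ?thesis
    unfolding n_digits k_digits
    by (elim disjE) (simp_all add: triple binomial_eq_0 numeral_2_eq_2)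
qed

lemma lucas_step:
  assumes "CHAR('a::comm_ring_1) = 3"
  shows "(of_nat (n choose k) :: 'a) = of_nat (n div 3 choose k div 3) * of_nat (n mod 3 choose k mod 3)"
proof (induction n arbitrary: k)
  case 0
  have "k div 3 \<noteq> 0 \<or> k mod 3 \<noteq> 0" if "k \<noteq> 0"
    using that div_mult_mod_eq[of k 3] by auto
  then show ?case
    by (cases "k = 0") (auto simp: binomial_eq_0)
next
  case (Suc n)
  then show ?case
    by (cases k) (simp_all add: lucas_pascal[OF three_eq_0[OF assms]])
qed

lemma lucas_digit:
  assumes ch: "CHAR('a::comm_ring_1) = 3" and "b < 3" "d < 3"
  shows "(of_nat ((3 * a + b) choose (3 * c + d)) :: 'a) = of_nat (a choose c) * of_nat (b choose d)"
  using lucas_step[OF ch, of "3 * a + b" "3 * c + d"] assms(2,3) by simp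

lemma lucas_power:
  assumes ch: "CHAR('a::comm_ring_1) = 3"
  shows "B < 3 ^ n \<Longrightarrow> D < 3 ^ n \<Longrightarrow>
    (of_nat ((3 ^ n * A + B) choose (3 ^ n * C + D)) :: 'a) = of_nat (A choose C) * of_nat (B choose D)"
proof (induction n arbitrary: A B C D)
  case (Suc n)
  define B1 B0 D1 D0 where "B1 = B div 3 ^ n" and "B0 = B mod 3 ^ n"
    and "D1 = D div 3 ^ n" and "D0 = D mod 3 ^ n"
  have B: "B = 3 ^ n * B1 + B0" "B0 < 3 ^ n" "B1 < 3" and D: "D = 3 ^ n * D1 + D0" "D0 < 3 ^ n" "D1 < 3"
    using Suc.prems by (simp_all add: B1_def B0_def D1_def D0_def div_less_iff_less_mult mult.commute)
  have "3 ^ Suc n * A + B = 3 ^ n * (3 * A + B1) + B0" "3 ^ Suc n * C + D = 3 ^ n * (3 * C + D1) + D0"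
    using B D by (simp_all add: algebra_simps)
  then have "(of_nat ((3 ^ Suc n * A + B) choose (3 ^ Suc n * C + D)) :: 'a)
      = of_nat (A choose C) * of_nat (B1 choose D1) * of_nat (B0 choose D0)"
    using Suc.IH B(2) D(2) lucas_digit[OF ch B(3) D(3)] by simp
  moreover have "(of_nat (B choose D) :: 'a) = of_nat (B1 choose D1) * of_nat (B0 choose D0)"
    using Suc.IH[OF B(2) D(2), of B1 D1] B(1) D(1) by simp
  ultimately show ?case
    by (simp add: algebra_simps)
qed simp

lemma lucas_digits:
  assumes ch: "CHAR('a::comm_ring_1) = 3"
  shows "n < 3 ^ N \<Longrightarrow> k < 3 ^ N \<Longrightarrow>
    (of_nat (n choose k) :: 'a) = (\<Prod>u<N. of_nat (digit3 n u choose digit3 k u))"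
proof (induction N arbitrary: n k)
  case 0
  then show ?case by simp
next
  case (Suc N)
  have "n div 3 < 3 ^ N" "k div 3 < 3 ^ N"
    using Suc.prems by (simp_all add: div_less_iff_less_mult)
  then have "(of_nat (n div 3 choose k div 3) :: 'a) = (\<Prod>u<N. of_nat (digit3 n (Suc u) choose digit3 k (Suc u)))"
    using Suc.IH by (simp add: digit3_Suc)
  moreover have "(\<Prod>u<Suc N. (of_nat (digit3 n u choose digit3 k u) :: 'a))
     = of_nat (digit3 n 0 choose digit3 k 0) * (\<Prod>u<N. of_nat (digit3 n (Suc u) choose digit3 k (Suc u)))"
    by (rule prod.lessThan_Suc_shift)
  ultimately show ?case
    using lucas_step[OF ch, of n k] by (simp only: digit3_0 mult.commute)
qed

lemma binomial_digits_le:
  assumes ch: "CHAR('a::comm_ring_1) = 3" and nz: "(of_nat (n choose k) :: 'a) \<noteq> 0"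
    and "n < 3 ^ N" "k < 3 ^ N" "v < N"
  shows "digit3 k v \<le> digit3 n v"
proof (rule ccontr)
  assume "\<not> ?thesis"
  then have "(of_nat (digit3 n v choose digit3 k v) :: 'a) = 0"
    by (simp add: binomial_eq_0)
  then have "(\<Prod>v<N. (of_nat (digit3 n v choose digit3 k v) :: 'a)) = 0"
    using assms(5) by (intro prod_zero) auto
  then show False
    using nz lucas_digits[OF ch assms(3,4)] by simp
qed

lemma binomial_disjoint_digits:
  assumes ch: "CHAR('a::comm_ring_1) = 3" and d: "d < 3"
  shows "(of_nat (((d * 3 ^ u + 3 ^ Suc u * x) choose (d * 3 ^ u))
    * ((d * 3 ^ u + 3 ^ Suc u * x) choose (3 ^ Suc u * x))) :: 'a) = 1"
proof -
  have i: "d * 3 ^ u < 3 ^ Suc u" using d by simp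
  have "(of_nat ((3 ^ Suc u * x + d * 3 ^ u) choose (3 ^ Suc u * 0 + d * 3 ^ u)) :: 'a) = 1"
    using lucas_power[OF ch i i, of x 0] by simp
  moreover have "(of_nat ((3 ^ Suc u * x + d * 3 ^ u) choose (3 ^ Suc u * x + 0)) :: 'a) = 1"
    using lucas_power[OF ch i, of 0 x x] by simp
  ultimately show ?thesis by (simp add: add.commute)
qed

lemma binomial_disjoint_digits_diff:
  assumes ch: "CHAR('a::comm_ring_1) = 3" and d: "d < 3" and t: "1 \<le> t" "t \<le> d * 3 ^ u"
  shows "(of_nat (((d * 3 ^ u + 3 ^ Suc u * x - t) choose (d * 3 ^ u))
    * ((d * 3 ^ u + 3 ^ Suc u * x - t) choose (3 ^ Suc u * x))) :: 'a) = 0"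
proof -
  have i: "d * 3 ^ u < 3 ^ Suc u" using d by simp
  have it: "d * 3 ^ u - t < 3 ^ Suc u"
    using i by (meson diff_le_self le_less_trans)
  have e: "d * 3 ^ u + 3 ^ Suc u * x - t = 3 ^ Suc u * x + (d * 3 ^ u - t)"
    using t by simp
  have "(of_nat ((3 ^ Suc u * x + (d * 3 ^ u - t)) choose (3 ^ Suc u * 0 + d * 3 ^ u)) :: 'a)
      = of_nat (x choose 0) * of_nat ((d * 3 ^ u - t) choose (d * 3 ^ u))"
    by (rule lucas_power[OF ch it i])
  also have "(d * 3 ^ u - t) choose (d * 3 ^ u) = 0"
    using t by (simp add: binomial_eq_0)
  finally show ?thesis unfolding e by simp
qed

lemma of_nat_square_eq_1:
  assumes ch: "CHAR('a::comm_ring_1) = 3" and n: "\<not> 3 dvd n"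
  shows "(of_nat n :: 'a) * of_nat n = 1"
proof -
  have "n mod 3 = 1 \<or> n mod 3 = 2"
    using n by presburger
  moreover have "n * n mod 3 = (n mod 3) * (n mod 3) mod 3"
    by (simp add: mod_mult_eq)
  ultimately have "[n * n = 1] (mod CHAR('a))"
    using ch by (auto simp: cong_def)
  then have "(of_nat (n * n) :: 'a) = of_nat 1"
    by (simp only: of_nat_eq_iff_cong_CHAR)
  then show ?thesis
    by simp
qed

section \<open>The product e_{m,g}\<close>

(* The digits of d 3^u and 3^(u+1) x are disjoint, so by Lucas only the term t = 0 of
   bmat_mult survives. *)
lemma bmat_mult_digit:
  assumes ch: "CHAR('a::comm_ring_1) = 3" and gr: "g \<le> r" and d: "d < 3"
  shows "mmul r (bmat r g (d * 3 ^ u)) (bmat r g (3 ^ Suc u * x))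
    = (bmat r g (d * 3 ^ u + 3 ^ Suc u * x) :: nat list \<Rightarrow> nat list \<Rightarrow> 'a)"
proof -
  let ?i = "d * 3 ^ u" and ?j = "3 ^ Suc u * x"
  obtain c :: "nat \<Rightarrow> int" where c0: "?i + ?j \<le> g \<longrightarrow> c 0 = 1"
    and prod: "mmul r (bmat r g ?i) (bmat r g ?j) = (\<lambda>w w'. \<Sum>t\<le>min ?i ?j. of_int (c t)
       * of_nat (((?i + ?j - t) choose ?i) * ((?i + ?j - t) choose ?j)) * (bmat r g (?i + ?j - t) w w' :: 'a))"
    using bmat_mult[OF gr, of ?i ?j] by blast
  have "of_int (c 0) * bmat r g (?i + ?j) w w' = (bmat r g (?i + ?j) w w' :: 'a)" for w w'
    using c0 bmat_eq_0[OF gr, of "?i + ?j", where 'a = 'a] by (cases "?i + ?j \<le> g") auto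
  moreover have "of_int (c t) * of_nat (((?i + ?j - t) choose ?i) * ((?i + ?j - t) choose ?j))
      * (bmat r g (?i + ?j - t) w w' :: 'a) = 0" if "1 \<le> t" "t \<le> ?i" for t w w'
    using binomial_disjoint_digits_diff[OF ch d that] by simp
  ultimately have "(\<Sum>t\<le>min ?i ?j. of_int (c t) * of_nat (((?i + ?j - t) choose ?i) * ((?i + ?j - t) choose ?j))
      * (bmat r g (?i + ?j - t) w w' :: 'a)) = bmat r g (?i + ?j) w w'" for w w'
    using binomial_disjoint_digits[OF ch d, of u x]
    by (subst sum.atMost_shift) (auto intro!: sum.neutral)
  then show ?thesis
    unfolding prod by blast
qed

(* Coefficient of b(d 3^u) in the factor of e_{m,g} at digit position u, for the digits
   c = g_u and a = (m+2g)_u; here b(0) = 1_lambda. *)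
definition digit_coeff :: "nat \<Rightarrow> nat \<Rightarrow> nat \<Rightarrow> 'a::comm_ring_1" where
  "digit_coeff c a d = (if c = 0 \<and> a = 0 then (if d = 0 then 1 else if d = 1 then 1 else -1)
   else if c = 1 \<and> a = 2 then (if d = 0 then 0 else if d = 1 then -1 else 1)
   else if c = 0 \<and> a = 1 then (if d = 0 then 1 else if d = 1 then 0 else -1)
   else if c = 2 \<and> a = 2 then (if d = 2 then 1 else 0)
   else if c = 0 \<and> a = 2 then (if d = 0 then 1 else if d = 1 then -1 else 1)
   else if c = 1 \<and> a = 1 then (if d = 0 then 0 else if d = 1 then 1 else -1)
   else (if d = 0 then 1 else 0))"

lemma sum_lessThan_3: "(\<Sum>d<(3::nat). f d) = f 0 + f 1 + (f 2 :: 'a::comm_monoid_add)"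
proof -
  have "{..<(3::nat)} = {0, 1, 2}"
    by auto
  then show ?thesis
    by (simp add: add.assoc)
qed

lemma emg_factor_eq:
  "emg_factor m g u = (\<lambda>w w'. \<Sum>d<3. digit_coeff (digit3 g u) (digit3 (m + 2 * g) u) d
     * (bmat (m + 2 * g) g (d * 3 ^ u) w w' :: 'a::comm_ring_1))"
  unfolding emg_factor_def Let_def bb_eq_bmat proj_eq_bmat_0 sum_lessThan_3
  by (intro ext) (auto simp: digit_coeff_def madd_def msub_def)

definition digit_coeff_prod :: "nat \<Rightarrow> nat \<Rightarrow> nat \<Rightarrow> nat \<Rightarrow> nat \<Rightarrow> 'a::comm_ring_1" where
  "digit_coeff_prod m g k M i
    = (\<Prod>v<M. digit_coeff (digit3 g (k + v)) (digit3 (m + 2 * g) (k + v)) (digit3 i v))"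

lemma sum_lessThan_power3_split:
  fixes h :: "nat \<Rightarrow> 'a::comm_monoid_add"
  shows "(\<Sum>i<3 ^ Suc M. h i) = (\<Sum>d<3. \<Sum>i<3 ^ M. h (d + 3 * i))"
proof -
  have "(\<Sum>d<3. \<Sum>i<3 ^ M. h (d + 3 * i)) = (\<Sum>p\<in>{..<3} \<times> {..<3 ^ M}. h (fst p + 3 * snd p))"
    by (simp add: sum.cartesian_product split_def)
  also have "\<dots> = (\<Sum>i<3 ^ Suc M. h i)"
    by (rule sum.reindex_bij_witness[of _ "\<lambda>i. (i mod 3, i div 3)" "\<lambda>p. fst p + 3 * snd p"])
       (auto simp: less_mult_imp_div_less div_less_iff_less_mult)
  finally show ?thesis
    by simp
qed

lemma digit_coeff_prod_step:
  "d < 3 \<Longrightarrow> (digit_coeff_prod m g k (Suc M) (d + 3 * i) :: 'a::comm_ring_1)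
     = digit_coeff (digit3 g k) (digit3 (m + 2 * g) k) d * digit_coeff_prod m g (Suc k) M i"
  unfolding digit_coeff_prod_def
  by (subst prod.lessThan_Suc_shift) (simp add: digit3_lowadd digit3_shift)

lemma emg_factor_mult_bmat:
  assumes ch: "CHAR('a::comm_ring_1) = 3"
  shows "mmul (m + 2 * g) (emg_factor m g k) (bmat (m + 2 * g) g (3 ^ Suc k * i))
    = (\<lambda>w w'. \<Sum>d<3. digit_coeff (digit3 g k) (digit3 (m + 2 * g) k) d
        * (bmat (m + 2 * g) g (3 ^ k * (d + 3 * i)) w w' :: 'a))"
proof -
  have "mmul (m + 2 * g) (bmat (m + 2 * g) g (d * 3 ^ k)) (bmat (m + 2 * g) g (3 ^ Suc k * i))
      = (bmat (m + 2 * g) g (3 ^ k * (d + 3 * i)) :: nat list \<Rightarrow> nat list \<Rightarrow> 'a)" if "d < 3" for d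
    using bmat_mult_digit[OF ch _ that, of g "m + 2 * g" k i] by (simp add: algebra_simps)
  then show ?thesis
    unfolding emg_factor_eq mmul_sum_left[OF finite_lessThan] by (intro ext sum.cong) simp_all
qed

lemma emg_partial_product:
  assumes ch: "CHAR('a::comm_ring_1) = 3"
  shows "k + M = N \<Longrightarrow> foldr (mmul (m + 2 * g)) (map (emg_factor m g) [k..<N]) (proj (m + 2 * g) (m + g))
    = (\<lambda>w w'. \<Sum>i<3 ^ M. digit_coeff_prod m g k M i * (bmat (m + 2 * g) g (3 ^ k * i) w w' :: 'a))"
proof (induction M arbitrary: k)
  case 0
  then show ?case
    by (simp add: proj_eq_bmat_0 digit_coeff_prod_def)
next
  case (Suc M)
  let ?r = "m + 2 * g" and ?c = "digit_coeff (digit3 g k) (digit3 (m + 2 * g) k)"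
  have "[k..<N] = k # [Suc k..<N]"
    using Suc.prems by (simp add: upt_conv_Cons)
  then have "foldr (mmul ?r) (map (emg_factor m g) [k..<N]) (proj ?r (m + g))
      = mmul ?r (emg_factor m g k)
          (\<lambda>w w'. \<Sum>i<3 ^ M. digit_coeff_prod m g (Suc k) M i * (bmat ?r g (3 ^ Suc k * i) w w' :: 'a))"
    using Suc.IH[of "Suc k"] Suc.prems by simp
  also have "\<dots> = (\<lambda>w w'. \<Sum>i<3 ^ M. \<Sum>d<3. digit_coeff_prod m g (Suc k) M i * ?c d
      * (bmat ?r g (3 ^ k * (d + 3 * i)) w w' :: 'a))"
    by (simp only: mmul_sum_right[OF finite_lessThan] emg_factor_mult_bmat[OF ch] sum_distrib_left mult.assoc)
  also have "\<dots> = (\<lambda>w w'. \<Sum>i<3 ^ Suc M. digit_coeff_prod m g k (Suc M) i * bmat ?r g (3 ^ k * i) w w')"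
    unfolding sum_lessThan_power3_split
    by (subst sum.swap, intro ext sum.cong refl, subst digit_coeff_prod_step) (simp_all add: mult_ac)
  finally show ?case .
qed

lemma digit_coeff_below: "c \<le> a \<Longrightarrow> a < 3 \<Longrightarrow> d < c \<Longrightarrow> digit_coeff c a d = 0"
  by (auto simp: digit_coeff_def)

lemma digit_coeff_diag:
  assumes ch: "CHAR('a::comm_ring_1) = 3" and "c \<le> a" "a < 3"
  shows "(digit_coeff c a c :: 'a) = of_nat (a choose c)"
proof -
  have m1: "(-1::'a) = 2"
    using three_eq_0[OF ch] by (simp add: eq_neg_iff_add_eq_0)
  have "a = 0 \<or> a = 1 \<or> a = 2" "c = 0 \<or> c = 1 \<or> c = 2"
    using assms by auto
  then show ?thesis
    using assms(2) by (auto simp: digit_coeff_def m1 numeral_eq_Suc)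
qed

lemma digit_coeff_prod_diag:
  assumes ch: "CHAR('a::comm_ring_1) = 3" and dle: "\<forall>v<N. digit3 g v \<le> digit3 (m + 2 * g) v"
    and "m + 2 * g < 3 ^ N" "g < 3 ^ N"
  shows "(digit_coeff_prod m g 0 N g :: 'a) = of_nat ((m + 2 * g) choose g)"
  unfolding digit_coeff_prod_def lucas_digits[OF ch assms(3,4)]
  using digit_coeff_diag[OF ch _ digit3_lt] dle by (intro prod.cong) simp_all

lemma digit_coeff_prod_below:
  assumes dle: "\<forall>v<N. digit3 g v \<le> digit3 (m + 2 * g) v" and "g < 3 ^ N" "i < g"
  shows "digit_coeff_prod m g 0 N i = 0"
proof -
  obtain v where v: "v < N" "digit3 i v < digit3 g v"
    using digitwise_le_imp_le[of N g i] assms(2,3) by (meson not_le)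
  then have "digit_coeff (digit3 g v) (digit3 (m + 2 * g) v) (digit3 i v) = 0"
    using dle digit_coeff_below digit3_lt by blast
  then show ?thesis
    unfolding digit_coeff_prod_def using v(1) by (intro prod_zero) auto
qed

lemma emg_eq_bmat:
  assumes ch: "CHAR('a::comm_ring_1) = 3" and B: "\<not> 3 dvd ((m + 2 * g) choose g)"
  shows "emg m g = (\<lambda>w w'. of_nat ((m + 2 * g) choose g) * (bmat (m + 2 * g) g g w w' :: 'a))"
proof -
  let ?r = "m + 2 * g" and ?N = "m + 2 * g + 1"
  have rN: "?r < 3 ^ ?N" and gN: "g < 3 ^ ?N"
    using less_power3[of ?N] by simp_all
  have "(of_nat (?r choose g) :: 'a) \<noteq> 0"
    using B ch by (simp add: of_nat_eq_0_iff_char_dvd)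
  then have dle: "\<forall>v<?N. digit3 g v \<le> digit3 ?r v"
    using binomial_digits_le[OF ch _ rN gN] by blast
  have "digit_coeff_prod m g 0 ?N i * bmat ?r g i w w' = (0::'a)" if "i \<noteq> g" for i w w'
  proof (cases "i < g")
    case True
    have "(digit_coeff_prod m g 0 ?N i :: 'a) = 0"
      by (rule digit_coeff_prod_below[OF dle gN True])
    then show ?thesis
      by simp
  next
    case False
    then have "(bmat ?r g i :: nat list \<Rightarrow> nat list \<Rightarrow> 'a) = (\<lambda>_ _. 0)"
      using that by (intro bmat_eq_0) auto
    then show ?thesis
      by simp
  qed
  then have "(\<Sum>i<3 ^ ?N. digit_coeff_prod m g 0 ?N i * bmat ?r g i w w')
      = (\<Sum>i<3 ^ ?N. if i = g then digit_coeff_prod m g 0 ?N g * bmat ?r g g w w' else (0::'a))" for w w'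
    by (intro sum.cong) auto
  moreover have "emg m g = (\<lambda>w w'. \<Sum>i<3 ^ ?N. digit_coeff_prod m g 0 ?N i * (bmat ?r g i w w' :: 'a))"
    unfolding emg_def using emg_partial_product[OF ch, of 0 ?N ?N m g] by simp
  ultimately show ?thesis
    using gN digit_coeff_prod_diag[OF ch dle rN gN] by simp
qed

lemma proj_top_dpe_dpf_proj_top:
  "mmul r (proj r r) (mmul r (mmul r (dpe r g) (dpf r g)) (proj r r))
    = (\<lambda>w w'. of_nat (r choose g) * proj r r w w')"
  unfolding mmul_proj_left mmul_proj_right
proof (intro ext)
  fix w w'
  show "(if w \<in> words r \<and> w' \<in> words r \<and> nones w = r then if w \<in> words r \<and> w' \<in> words r \<and> nones w' = r
      then mmul r (dpe r g) (dpf r g) w w' else 0 else 0) = of_nat (r choose g) * proj r r w w'"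
  proof (cases "w \<in> words r \<and> w' \<in> words r \<and> nones w = r \<and> nones w' = r")
    case True
    then have "card (twos w) = 0" "card (twos w') = 0" "card (twos w' \<inter> twos w) = 0" "w = w'"
      using nones_iff_card_twos[of _ r 0] words_with_no_twos by auto
    then show ?thesis
      using True by (simp add: dpe_dpf_entry_weight proj_def)
  qed (auto simp: proj_def)
qed

lemma mmul_u_v:
  assumes "g \<le> r"
  shows "mmul r (\<lambda>w w'. c * mmul r (proj r (r - g)) (mmul r (dpf r g) (proj r r)) w w')
      (mmul r (proj r r) (mmul r (dpe r g) (proj r (r - g)))) = (\<lambda>w w'. c * (bmat r g g w w' :: 'a::comm_ring_1))"
proof -
  have "rows_of_weight r 0 (mmul r (dpe r g) (proj r (r - g)) :: nat list \<Rightarrow> nat list \<Rightarrow> 'a)"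
    using rows_of_weight_dpe[OF rows_of_weight_proj[OF assms], of g] by simp
  from proj_mult_absorb[OF this] show ?thesis
    by (simp add: mmul_scale_left mmul_assoc bmat_def)
qed

lemma mmul_v_u:
  assumes "g \<le> r"
  shows "mmul r (mmul r (proj r r) (mmul r (dpe r g) (proj r (r - g))))
      (\<lambda>w w'. c * mmul r (proj r (r - g)) (mmul r (dpf r g) (proj r r)) w w')
    = (\<lambda>w w'. c * of_nat (r choose g) * (proj r r w w' :: 'a::comm_ring_1))"
proof -
  have "rows_of_weight r g (mmul r (dpf r g) (proj r r) :: nat list \<Rightarrow> nat list \<Rightarrow> 'a)"
    using rows_of_weight_dpf[OF rows_of_weight_proj[of 0 r], of g] by simp
  from proj_mult_absorb[OF this assms] show ?thesis
    by (simp add: mmul_scale_right mmul_assoc proj_top_dpe_dpf_proj_top[unfolded mmul_assoc] algebra_simps)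
qed

section \<open>Rank one permutation modules\<close>

lemma place_permute_word:
  assumes s: "\<sigma> permutes {..<r}" and w: "w \<in> words r"
  shows "map (\<lambda>i. w ! \<sigma> i) [0..<r] \<in> words r \<and> nones (map (\<lambda>i. w ! \<sigma> i) [0..<r]) = nones w"
proof -
  have l: "length w = r"
    using w by (simp add: length_words)
  then have p: "map (\<lambda>i. w ! \<sigma> i) [0..<r] = permute_list \<sigma> w"
    by (simp add: permute_list_def)
  have "mset (permute_list \<sigma> w) = mset w"
    using s l by (intro mset_permute_list) simp
  then have "set (permute_list \<sigma> w) = set w" "nones (permute_list \<sigma> w) = nones w"
    unfolding nones_def by (metis mset_eq_setD, metis mset_filter size_mset)
  then show ?thesis
    unfolding p using w l by (auto simp: words_def)
qed

definition weight_indicator :: "nat \<Rightarrow> nat \<Rightarrow> nat list \<Rightarrow> 'a::comm_ring_1" where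
  "weight_indicator r k w = (if w \<in> words r \<and> nones w = k then 1 else 0)"

definition indicator_line :: "nat \<Rightarrow> nat \<Rightarrow> (nat list \<Rightarrow> 'a::comm_ring_1) set" where
  "indicator_line r k = range (\<lambda>c w. c * weight_indicator r k w)"

lemma place_act_weight_indicator:
  assumes "\<sigma> permutes {..<r}"
  shows "place_act r \<sigma> (\<lambda>w. c * weight_indicator r k w) = (\<lambda>w. c * weight_indicator r k w)"
  using place_permute_word[OF assms] by (auto simp: place_act_def weight_indicator_def)

lemma FSr_submodule_indicator_line:
  "FSr_submodule r (indicator_line r k :: (nat list \<Rightarrow> 'a::comm_ring_1) set)"
  unfolding FSr_submodule_def
proof (intro conjI ballI allI impI)
  show "indicator_line r k \<subseteq> vecs r"
    by (auto simp: indicator_line_def vecs_def weight_indicator_def)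
  show "(\<lambda>_. 0) \<in> indicator_line r k"
    unfolding indicator_line_def by (rule range_eqI[of _ _ 0]) simp
next
  fix x y :: "nat list \<Rightarrow> 'a" assume "x \<in> indicator_line r k" "y \<in> indicator_line r k"
  then obtain a b where "x = (\<lambda>w. a * weight_indicator r k w)" "y = (\<lambda>w. b * weight_indicator r k w)"
    by (auto simp: indicator_line_def)
  then show "(\<lambda>w. x w + y w) \<in> indicator_line r k"
    unfolding indicator_line_def by (intro range_eqI[of _ _ "a + b"]) (simp add: algebra_simps)
next
  fix c and x :: "nat list \<Rightarrow> 'a" assume "x \<in> indicator_line r k"
  then obtain a where "x = (\<lambda>w. a * weight_indicator r k w)"
    by (auto simp: indicator_line_def)
  then show "(\<lambda>w. c * x w) \<in> indicator_line r k"
    unfolding indicator_line_def by (intro range_eqI[of _ _ "c * a"]) (simp add: algebra_simps)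
next
  fix \<sigma> and x :: "nat list \<Rightarrow> 'a" assume "\<sigma> permutes {..<r}" "x \<in> indicator_line r k"
  then show "place_act r \<sigma> x \<in> indicator_line r k"
    by (auto simp: indicator_line_def place_act_weight_indicator)
qed

lemma weight_indicator_witness: "k \<le> r \<Longrightarrow> weight_indicator r k (word_of_set r {..<r - k}) = 1"
  using nones_word_of_set[of "{..<r - k}" r] by (simp add: weight_indicator_def word_of_set_in_words)

lemma indicator_line_coeff_inject:
  assumes "k \<le> r"
  shows "(\<lambda>w. a * weight_indicator r k w) = (\<lambda>w. b * weight_indicator r k w) \<longleftrightarrow> a = b"
proof
  assume "(\<lambda>w. a * weight_indicator r k w) = (\<lambda>w. b * weight_indicator r k w)"
  from fun_cong[OF this, of "word_of_set r {..<r - k}"] show "a = b"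
    by (simp add: weight_indicator_witness[OF assms])
qed simp

lemma FSr_iso_indicator_lines:
  assumes "k \<le> r" "k' \<le> r"
  shows "FSr_iso r (indicator_line r k :: (nat list \<Rightarrow> 'a::comm_ring_1) set) (indicator_line r k')"
  unfolding FSr_iso_def
proof (intro conjI FSr_submodule_indicator_line
    exI[of _ "\<lambda>f w. f (word_of_set r {..<r - k}) * weight_indicator r k' w"])
qed (auto simp: bij_betw_def inj_on_def indicator_line_def image_image algebra_simps
  weight_indicator_witness indicator_line_coeff_inject assms place_act_weight_indicator)

lemma bmat_g_eq_indicators:
  assumes "g \<le> r"
  shows "(bmat r g g w w' :: 'a::comm_ring_1) = weight_indicator r (r - g) w * weight_indicator r (r - g) w'"
proof -
  have "(bmat r g g w w' :: 'a)
      = mmul r (proj r (r - g)) (mmul r (mmul r (dpf r g) (dpe r g)) (proj r (r - g))) w w'"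
    unfolding bmat_def by (simp only: mmul_assoc)
  also have "\<dots> = (if w \<in> words r \<and> w' \<in> words r \<and> nones w = r - g \<and> nones w' = r - g
      then mmul r (dpf r g) (dpe r g) w w' else 0)"
    unfolding mmul_proj_left mmul_proj_right by auto
  finally have bmat_gg: "(bmat r g g w w' :: 'a) = \<dots>" .
  show ?thesis
  proof (cases "w \<in> words r \<and> w' \<in> words r \<and> nones w = r - g \<and> nones w' = r - g")
    case True
    then have "card (twos w) = g" "card (twos w') = g"
      using nones_iff_card_twos[OF _ assms] by auto
    then show ?thesis
      using True by (simp add: bmat_gg dpf_dpe_entry weight_indicator_def)
  qed (auto simp: bmat_gg weight_indicator_def)
qed

lemma mapply_emg:
  assumes ch: "CHAR('a::comm_ring_1) = 3" and B: "\<not> 3 dvd ((m + 2 * g) choose g)"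
  shows "mapply (m + 2 * g) (emg m g) x = (\<lambda>w. (of_nat ((m + 2 * g) choose g)
     * (\<Sum>w'\<in>words (m + 2 * g). weight_indicator (m + 2 * g) (m + g) w' * x w'))
     * (weight_indicator (m + 2 * g) (m + g) w :: 'a))"
proof (intro ext)
  fix w
  let ?r = "m + 2 * g" and ?I = "weight_indicator (m + 2 * g) (m + g) :: nat list \<Rightarrow> 'a"
  have r_g: "?r - g = m + g"
    by simp
  have "bmat ?r g g w w' = ?I w * ?I w'" for w'
    using bmat_g_eq_indicators[of g ?r w w'] unfolding r_g by simp
  moreover have "?I w = 0" if "w \<notin> words ?r"
    using that by (simp add: weight_indicator_def)
  ultimately show "mapply ?r (emg m g) x w = of_nat (?r choose g) * (\<Sum>w'\<in>words ?r. ?I w' * x w') * ?I w"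
    unfolding mapply_def emg_eq_bmat[OF ch B] by (simp add: sum_distrib_left mult_ac)
qed

lemma emg_image_eq_indicator_line:
  assumes ch: "CHAR('a::field) = 3" and B: "\<not> 3 dvd ((m + 2 * g) choose g)"
  shows "mapply (m + 2 * g) (emg m g :: nat list \<Rightarrow> nat list \<Rightarrow> 'a) ` permmod (m + 2 * g) (m + g)
    = indicator_line (m + 2 * g) (m + g)"
proof
  let ?r = "m + 2 * g"
  let ?B = "(of_nat (?r choose g) :: 'a)"
  show "mapply ?r (emg m g :: nat list \<Rightarrow> nat list \<Rightarrow> 'a) ` permmod ?r (m + g) \<subseteq> indicator_line ?r (m + g)"
    unfolding mapply_emg[OF ch B] indicator_line_def by auto
  show "indicator_line ?r (m + g) \<subseteq> mapply ?r (emg m g :: nat list \<Rightarrow> nat list \<Rightarrow> 'a) ` permmod ?r (m + g)"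
  proof
    fix y assume "y \<in> (indicator_line ?r (m + g) :: (nat list \<Rightarrow> 'a) set)"
    then obtain c where y: "y = (\<lambda>w. c * weight_indicator ?r (m + g) w)"
      by (auto simp: indicator_line_def)
    define w0 where "w0 = word_of_set ?r {..<g}"
    have w0: "w0 \<in> words ?r" "nones w0 = m + g"
      using nones_word_of_set[of "{..<g}" ?r] by (auto simp: w0_def word_of_set_in_words)
    define x :: "nat list \<Rightarrow> 'a" where "x = (\<lambda>w. if w = w0 then c / ?B else 0)"
    have "x \<in> permmod ?r (m + g)"
      using w0 by (auto simp: x_def permmod_def vecs_def)
    moreover have "(\<Sum>w'\<in>words ?r. weight_indicator ?r (m + g) w' * x w') = c / ?B"
      using w0 by (simp add: x_def weight_indicator_def if_distrib if_distribR sum.If_cases)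
    moreover have "?B \<noteq> 0"
      using B ch by (simp add: of_nat_eq_0_iff_char_dvd)
    ultimately show "y \<in> mapply ?r (emg m g :: nat list \<Rightarrow> nat list \<Rightarrow> 'a) ` permmod ?r (m + g)"
      unfolding y mapply_emg[OF ch B] by (intro image_eqI[of _ _ x]) auto
  qed
qed

lemma permmod_all_ones: "permmod r r = indicator_line r r"
proof
  show "permmod r r \<subseteq> indicator_line r r"
  proof
    fix y assume y: "y \<in> permmod r r"
    have "y w = y (word_of_set r {}) * weight_indicator r r w" for w
      using y words_with_no_twos[of w r] by (auto simp: permmod_def vecs_def weight_indicator_def)
    then show "y \<in> indicator_line r r"
      unfolding indicator_line_def by blast
  qed
  show "indicator_line r r \<subseteq> permmod r r"
    by (auto simp: indicator_line_def permmod_def vecs_def weight_indicator_def split: if_splits)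
qed

theorem mainTheorem12:
  fixes l1 l2 m g :: nat
  assumes char3: "CHAR('a::field) = 3"
    and partition: "l1 \<ge> l2"
    and m_def: "m = l1 - l2"
    and g_le: "g \<le> l2"
    and B_nz: "\<not> (3::nat) dvd ((m + 2 * g) choose g)"
  shows "FSr_iso (m + 2 * g)
           (mapply (m + 2 * g) (emg m g :: nat list \<Rightarrow> nat list \<Rightarrow> 'a) ` permmod (m + 2 * g) (m + g))
           (permmod (m + 2 * g) (m + 2 * g))
       \<and> (let r = m + 2 * g;
              u = (\<lambda>w w'. of_nat ((m + 2 * g) choose g) *
                     mmul r (proj r (m + g)) (mmul r (dpf r g) (proj r r)) w w' :: 'a);
              v = mmul r (proj r r) (mmul r (dpe r g) (proj r (m + g))) :: nat list \<Rightarrow> nat list \<Rightarrow> 'a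
          in mmul r u v = emg m g \<and> mmul r v u = proj r r)"
proof -
  \<comment> \<open>\<open>partition\<close>, \<open>m_def\<close> and \<open>g_le\<close> only fix the notation \<open>\<lambda> = (l1, l2)\<close>; both claims
     depend on \<open>m\<close> and \<open>g\<close> alone.\<close>
  have g: "g \<le> m + 2 * g" and r_g: "m + 2 * g - g = m + g"
    by simp_all
  have "FSr_iso (m + 2 * g) (indicator_line (m + 2 * g) (m + g) :: (nat list \<Rightarrow> 'a) set)
      (indicator_line (m + 2 * g) (m + 2 * g))"
    by (rule FSr_iso_indicator_lines) simp_all
  then show ?thesis
    unfolding emg_image_eq_indicator_line[OF char3 B_nz] permmod_all_ones
    unfolding Let_def mmul_u_v[OF g, unfolded r_g] mmul_v_u[OF g, unfolded r_g]
      emg_eq_bmat[OF char3 B_nz] of_nat_square_eq_1[OF char3 B_nz]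
    by simp
qed

end
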